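(* Let $\lambda>0$, $c>0$, $0<p<1$, and let $\big(X(t),Y(t)\big)$ be the planar orthogonal random motion described in the context. Then for all real $\alpha$ and $t>0$, \begin{align*}\mathbb{E}\left[e^{i\alpha(X(t)-Y(t))}\,\mathbf{1}_{\{X(t)+Y(t)=ct\}}\right]=\frac{e^{-\lambda t}}{4}&\left[\left(1+\frac{\lambda p}{\sqrt{\lambda^2p^2-\alpha^2c^2}}\right)e^{t\sqrt{\lambda^2p^2-\alpha^2c^2}}\right.\\&\left.+\left(1-\frac{\lambda p}{\sqrt{\lambda^2p^2-\alpha^2c^2}}\right)e^{-t\sqrt{\lambda^2p^2-\alpha^2c^2}}\right].\end{align*}
   Context: Directions: $d_j=\big(\cos(\pi j/2),\sin(\pi j/2)\big)$, $j=0,1,2,3$, indices mod 4. Let $N(t)$ be a homogeneous Poisson process of rate $\lambda$. The direction process $D(t)$ has $D(0)$ uniform on the four directions and changes only at Poisson event times: from a horizontal direction ($d_0,d_2$) it turns counterclockwise ($d_j\to d_{j+1}$) with probability $p$ and clockwise ($d_j\to d_{j-1}$) with probability $1-p$; from a vertical direction ($d_1,d_3$) it turns counterclockwise with probability $1-p$ and clockwise with probability $p$ (independent choices). The position is $\big(X(t),Y(t)\big)=c\int_0^t D(\tau)\,d\tau$ starting from the origin. Square roots are principal branches, understood by continuity where the radicand vanishes. *)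

theory Defs
  imports "HOL-Probability.Probability"
begin

text \<open>A sample is (d0, (tau, u)): d0 is the initial direction index (uniform on {0,1,2,3}),
  tau k (k = 0,1,...) are the i.i.d. exponential(lambda) inter-arrival times of the Poisson
  process N, and u k are i.i.d. Bernoulli(p) coins used at the (k+1)-st Poisson event:
  from a horizontal direction the particle turns counterclockwise iff u k,
  from a vertical direction it turns counterclockwise iff not u k.\<close>

definition orth_space :: "real \<Rightarrow> real \<Rightarrow> (nat \<times> (nat \<Rightarrow> real) \<times> (nat \<Rightarrow> bool)) measure" where
  "orth_space lam p =
     measure_pmf (pmf_of_set {0..<4::nat}) \<Otimes>\<^sub>M
       (PiM UNIV (\<lambda>_. density lborel (exponential_density lam)) \<Otimes>\<^sub>M
        PiM UNIV (\<lambda>_. measure_pmf (bernoulli_pmf p)))"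

definition arrival :: "(nat \<Rightarrow> real) \<Rightarrow> nat \<Rightarrow> real" where
  "arrival tau k = (\<Sum>i<k. tau i)"

definition pcount :: "(nat \<Rightarrow> real) \<Rightarrow> real \<Rightarrow> nat" where
  "pcount tau s = card {k. 1 \<le> k \<and> arrival tau k \<le> s}"

text \<open>Direction index (an integer, read mod 4) after k turns; d_j = (cos(pi j/2), sin(pi j/2)).
  Horizontal directions are those with even index.\<close>
fun dir_index :: "nat \<Rightarrow> (nat \<Rightarrow> bool) \<Rightarrow> nat \<Rightarrow> int" where
  "dir_index d0 u 0 = int d0"
| "dir_index d0 u (Suc k) =
     (let j = dir_index d0 u k;
          ccw = (if even j then u k else \<not> u k)
      in if ccw then j + 1 else j - 1)"

definition Dir :: "nat \<times> (nat \<Rightarrow> real) \<times> (nat \<Rightarrow> bool) \<Rightarrow> real \<Rightarrow> real \<times> real" where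
  "Dir \<omega> s = (let j = dir_index (fst \<omega>) (snd (snd \<omega>)) (pcount (fst (snd \<omega>)) s)
              in (cos (pi * of_int j / 2), sin (pi * of_int j / 2)))"

definition posX :: "real \<Rightarrow> nat \<times> (nat \<Rightarrow> real) \<times> (nat \<Rightarrow> bool) \<Rightarrow> real \<Rightarrow> real" where
  "posX c \<omega> t = c * integral {0..t} (\<lambda>s. fst (Dir \<omega> s))"

definition posY :: "real \<Rightarrow> nat \<times> (nat \<Rightarrow> real) \<times> (nat \<Rightarrow> bool) \<Rightarrow> real \<Rightarrow> real" where
  "posY c \<omega> t = c * integral {0..t} (\<lambda>s. snd (Dir \<omega> s))"

text \<open>The bracket (1 + a/s) e^{ts} + (1 - a/s) e^{-ts}, with s the principal square root;
  at s = 0 it is defined by continuity (limit value 2 + 2 a t).\<close>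
definition bracket :: "real \<Rightarrow> real \<Rightarrow> complex \<Rightarrow> complex" where
  "bracket a t s = (if s = 0 then complex_of_real (2 + 2 * a * t)
     else (1 + complex_of_real a / s) * exp (complex_of_real t * s)
        + (1 - complex_of_real a / s) * exp (- complex_of_real t * s))"

end

theory Submission
  imports Defs
begin

text \<open>
  Condition on the initial direction and on the first Poisson event. Started in \<open>d\<^sub>2\<close> or
  \<open>d\<^sub>3\<close>, the particle has \<open>X + Y < ct\<close> for all \<open>t > 0\<close>, since \<open>X + Y\<close> grows at most
  at speed \<open>c\<close>. Started in \<open>d\<^sub>0\<close>, it stays on the edge \<open>x + y = ct\<close> only by turning to
  \<open>d\<^sub>1\<close> at the first event (probability \<open>p\<close>), and from \<open>d\<^sub>1\<close> only by turning back to
  \<open>d\<^sub>0\<close>. With \<open>a = \<alpha> c\<close>, the edge characteristic functions \<open>F\<^sub>0\<close>, \<open>F\<^sub>1\<close> of these two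
  initial directions therefore solve the coupled renewal equations
    \<open>F\<^sub>0(t) = exp(-\<lambda>t + iat) + \<lambda>p \<integral>\<^sub>0\<^sup>t exp(-\<lambda>x + iax) F\<^sub>1(t - x) dx\<close>,
    \<open>F\<^sub>1(t) = exp(-\<lambda>t - iat) + \<lambda>p \<integral>\<^sub>0\<^sup>t exp(-\<lambda>x - iax) F\<^sub>0(t - x) dx\<close>.
  With \<open>C\<close>, \<open>S\<close> the cosine and sine solutions of \<open>y'' = (\<lambda>\<^sup>2p\<^sup>2 - a\<^sup>2) y\<close>, the pair
  \<open>exp(-\<lambda>t) (C(t) + (\<lambda>p + ia) S(t))\<close>, \<open>exp(-\<lambda>t) (C(t) + (\<lambda>p - ia) S(t))\<close> solves the
  same system, and the difference of two bounded solutions satisfies a convolution Gronwall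
  inequality, so they coincide. Averaging over the uniform initial direction gives
  \<open>(F\<^sub>0 + F\<^sub>1)/4\<close>, and \<open>2C + 2\<lambda>p S\<close> is the bracket.
\<close>

section \<open>Integrals on intervals and on sequence spaces\<close>

lemma
  fixes f :: "real \<Rightarrow> 'b::euclidean_space"
  assumes f: "f \<in> borel_measurable borel" and bound: "\<And>s. s \<in> {a..b} \<Longrightarrow> norm (f s) \<le> B"
  shows integrable_on_Icc_bounded_measurable: "f integrable_on {a..b}"
    and integral_Icc_bounded_measurable: "integral {a..b} f = (\<integral>s. indicator {a..b} s *\<^sub>R f s \<partial>lborel)"
proof -
  have "integrable lborel (\<lambda>s. indicator {a..b} s * B :: real)"
    by (intro integrable_mult_left integrable_real_indicator) (simp_all add: emeasure_lborel_Icc_eq)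
  then have "set_integrable lborel {a..b} f"
    unfolding set_integrable_def
    by (rule Bochner_Integration.integrable_bound)
       (use f bound in \<open>auto simp: indicator_def intro: order_trans[OF _ abs_ge_self]\<close>)
  from set_borel_integral_eq_integral[OF this]
  show "f integrable_on {a..b}" "integral {a..b} f = (\<integral>s. indicator {a..b} s *\<^sub>R f s \<partial>lborel)"
    by (simp_all add: set_lebesgue_integral_def)
qed

lemma integrable_on_reflect_bounded_measurable:
  fixes f :: "real \<Rightarrow> 'b::euclidean_space"
  assumes f: "f \<in> borel_measurable borel" and bound: "\<And>y. y \<in> {0..s} \<Longrightarrow> norm (f y) \<le> B"
  shows "(\<lambda>x. f (s - x)) integrable_on {0..s}"
  using measurable_compose[OF _ f, of "\<lambda>x. s - x"] bound
  by (intro integrable_on_Icc_bounded_measurable[where B=B]) auto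

lemma integral_power_diff:
  assumes t: "0 \<le> t" shows "integral {0..t} (\<lambda>x. (t - x) ^ n) = t ^ Suc n / Suc n"
proof -
  define f where "f = (\<lambda>x::real. - ((t - x) ^ Suc n) / Suc n)"
  have "((\<lambda>x. (t - x) ^ n) has_integral (f t - f 0)) {0..t}"
  proof (rule fundamental_theorem_of_calculus[OF t])
    fix x :: real
    have "(f has_real_derivative (t - x) ^ n) (at x)"
      unfolding f_def by (auto intro!: derivative_eq_intros simp del: power_Suc)
    then show "(f has_vector_derivative (t - x) ^ n) (at x within {0..t})"
      by (simp add: has_real_derivative_iff_has_vector_derivative has_vector_derivative_at_within)
  qed
  then show ?thesis by (simp add: integral_unique f_def)
qed

lemma convolution_gronwall:
  fixes \<phi> :: "real \<Rightarrow> real"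
  assumes k: "0 \<le> k" and \<phi>: "\<phi> \<in> borel_measurable borel"
    and bound: "\<And>s. s \<in> {0..T} \<Longrightarrow> 0 \<le> \<phi> s \<and> \<phi> s \<le> M"
    and ineq: "\<And>s. s \<in> {0..T} \<Longrightarrow> \<phi> s \<le> k * integral {0..s} (\<lambda>x. \<phi> (s - x))"
    and s: "s \<in> {0..T}"
  shows "\<phi> s = 0"
proof -
  have iterate: "\<phi> s \<le> M * (k * s) ^ n / fact n" if "s \<in> {0..T}" for n s
    using that
  proof (induction n arbitrary: s)
    case 0
    then show ?case using bound by simp
  next
    case (Suc n)
    have "(\<lambda>x. \<phi> (s - x)) integrable_on {0..s}"
      using Suc.prems bound by (intro integrable_on_reflect_bounded_measurable[OF \<phi>, where B=M]) auto
    then have "integral {0..s} (\<lambda>x. \<phi> (s - x)) \<le> integral {0..s} (\<lambda>x. M * k ^ n / fact n * (s - x) ^ n)"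
    proof (rule integral_le)
      show "(\<lambda>x. M * k ^ n / fact n * (s - x) ^ n) integrable_on {0..s}"
        by (intro integrable_continuous_interval continuous_intros)
      show "\<phi> (s - x) \<le> M * k ^ n / fact n * (s - x) ^ n" if "x \<in> {0..s}" for x
        using Suc.IH[of "s - x"] that Suc.prems by (simp add: power_mult_distrib)
    qed
    also have "\<dots> = M * k ^ n / fact n * (s ^ Suc n / Suc n)"
      using Suc.prems by (simp add: integral_power_diff)
    finally have "k * integral {0..s} (\<lambda>x. \<phi> (s - x)) \<le> k * (M * k ^ n / fact n * (s ^ Suc n / Suc n))"
      using k by (rule mult_left_mono)
    also have "\<dots> = M * (k * s) ^ Suc n / fact (Suc n)"
      by (simp add: power_mult_distrib field_simps)
    finally show ?case using ineq[OF Suc.prems] by linarith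
  qed
  have "(\<lambda>n. M * (k * s) ^ n / fact n) \<longlonglongrightarrow> 0"
    using tendsto_mult_right_zero[OF summable_LIMSEQ_zero[OF summable_exp], of M "k * s"]
    by (simp add: field_simps)
  then have "\<phi> s \<le> 0"
    by (rule LIMSEQ_le_const) (use iterate s in auto)
  then show ?thesis using bound[OF s] by simp
qed

lemma (in prob_space) nn_integral_PiM_case_nat:
  assumes [measurable]: "f \<in> borel_measurable (PiM UNIV (\<lambda>_::nat. M))"
  shows "(\<integral>\<^sup>+\<omega>. f \<omega> \<partial>PiM UNIV (\<lambda>_. M)) = (\<integral>\<^sup>+x. (\<integral>\<^sup>+\<omega>. f (case_nat x \<omega>) \<partial>PiM UNIV (\<lambda>_. M)) \<partial>M)"
proof -
  interpret S: sequence_space M ..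
  interpret P: pair_sigma_finite M "\<Pi>\<^sub>M i::nat\<in>UNIV. M" ..
  have "(\<integral>\<^sup>+\<omega>. f \<omega> \<partial>S.S) = (\<integral>\<^sup>+X. f ((\<lambda>(s, \<omega>). case_nat s \<omega>) X) \<partial>(M \<Otimes>\<^sub>M S.S))"
    by (subst S.PiM_iter[symmetric]) (simp add: nn_integral_distr)
  also have "\<dots> = (\<integral>\<^sup>+x. \<integral>\<^sup>+X. f ((\<lambda>(s, \<omega>). case_nat s \<omega>) (x, X)) \<partial>S.S \<partial>M)"
    by (subst S.nn_integral_fst) simp_all
  finally show ?thesis by simp
qed

lemma (in prob_space) integral_PiM_case_nat:
  fixes f :: "_ \<Rightarrow> 'b::{banach, second_countable_topology}"
  assumes [measurable]: "f \<in> borel_measurable (PiM UNIV (\<lambda>_::nat. M))"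
    and bound: "\<And>\<omega>. norm (f \<omega>) \<le> K"
  shows "(\<integral>\<omega>. f \<omega> \<partial>PiM UNIV (\<lambda>_. M)) = (\<integral>x. (\<integral>\<omega>. f (case_nat x \<omega>) \<partial>PiM UNIV (\<lambda>_. M)) \<partial>M)"
proof -
  interpret S: sequence_space M ..
  interpret P: pair_sigma_finite M "\<Pi>\<^sub>M i::nat\<in>UNIV. M" ..
  interpret MS: prob_space "M \<Otimes>\<^sub>M S.S" by (rule prob_space_pair) unfold_locales
  have "(\<integral>\<omega>. f \<omega> \<partial>S.S) = (\<integral>X. f ((\<lambda>(s, \<omega>). case_nat s \<omega>) X) \<partial>(M \<Otimes>\<^sub>M S.S))"
    by (subst S.PiM_iter[symmetric]) (simp add: integral_distr)
  also have "\<dots> = (\<integral>x. \<integral>X. f ((\<lambda>(s, \<omega>). case_nat s \<omega>) (x, X)) \<partial>S.S \<partial>M)"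
    by (rule P.integral_fst'[symmetric], rule MS.integrable_const_bound[where B=K]) (simp_all add: bound)
  finally show ?thesis by simp
qed

lemma (in prob_space) norm_integral_le_const:
  fixes f :: "_ \<Rightarrow> 'b::{banach, second_countable_topology}"
  assumes bound: "\<And>\<omega>. norm (f \<omega>) \<le> K"
  shows "norm (integral\<^sup>L M f) \<le> K"
proof (cases "integrable M f")
  case True
  have "norm (integral\<^sup>L M f) \<le> (\<integral>x. norm (f x) \<partial>M)" by (rule integral_norm_bound)
  also have "\<dots> \<le> (\<integral>x. K \<partial>M)"
    by (rule integral_mono) (use True bound in auto)
  finally show ?thesis by (simp add: prob_space)
next
  case False
  have "0 \<le> K" using bound[of undefined] norm_ge_zero order_trans by blast
  then show ?thesis using False by (simp add: not_integrable_integral_eq)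
qed

lemma has_vector_derivative_cis_mult:
  "((\<lambda>x. cis (a * x)) has_vector_derivative (\<i> * a * cis (a * x))) (at x within S)"
proof -
  have "((\<lambda>x. cis (a * x)) has_derivative (\<lambda>h. (a * h) *\<^sub>R (\<i> * cis (a * x)))) (at x within S)"
    by (rule has_derivative_cis[OF has_derivative_mult_right[OF has_derivative_ident]])
  moreover have "(\<lambda>h. (a * h) *\<^sub>R (\<i> * cis (a * x))) = (\<lambda>h. h *\<^sub>R (\<i> * a * cis (a * x)))"
    by (simp add: fun_eq_iff scaleR_conv_of_real algebra_simps)
  ultimately show ?thesis by (simp add: has_vector_derivative_def)
qed

section \<open>Directions and Poisson arrivals\<close>

type_synonym sample = "(nat \<Rightarrow> real) \<times> (nat \<Rightarrow> bool)"

definition turn :: "int \<Rightarrow> bool \<Rightarrow> int" where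
  "turn j b = (if (if even j then b else \<not> b) then j + 1 else j - 1)"

text \<open>\<^const>\<open>dir_index\<close> with an integer starting index, so that the process after its first
  turn is again of this form.\<close>

fun dir_index_from :: "int \<Rightarrow> (nat \<Rightarrow> bool) \<Rightarrow> nat \<Rightarrow> int" where
  "dir_index_from j u 0 = j"
| "dir_index_from j u (Suc k) = turn (dir_index_from j u k) (u k)"

lemma dir_index_eq_from: "dir_index d0 u k = dir_index_from (int d0) u k"
  by (induction k) (simp_all add: turn_def Let_def)

lemma dir_index_from_case_nat:
  "dir_index_from j (case_nat b u) (Suc k) = dir_index_from (turn j b) u k"
  by (induction k) simp_all

lemma arrival_0 [simp]: "arrival \<tau> 0 = 0"
  by (simp add: arrival_def)

lemma arrival_case_nat_Suc: "arrival (case_nat x \<tau>) (Suc k) = x + arrival \<tau> k"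
  unfolding arrival_def by (subst sum.lessThan_Suc_shift) simp

lemma arrival_mono: "(\<And>i. 0 < \<tau> i) \<Longrightarrow> k \<le> k' \<Longrightarrow> arrival \<tau> k \<le> arrival \<tau> k'"
  unfolding arrival_def by (rule sum_mono2) (auto intro: less_imp_le)

lemma arrival_nonneg: "(\<And>i. 0 < \<tau> i) \<Longrightarrow> 0 \<le> arrival \<tau> k"
  using arrival_mono[of \<tau> 0 k] by simp

text \<open>Finitely many arrivals below each time are needed: otherwise \<^const>\<open>pcount\<close>, being a
  cardinality, would be 0.\<close>

definition regular_arrivals :: "(nat \<Rightarrow> real) \<Rightarrow> bool" where
  "regular_arrivals \<tau> \<longleftrightarrow> (\<forall>k. 0 < \<tau> k) \<and> (\<forall>T. finite {k. arrival \<tau> k \<le> T})"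

lemma regular_arrivals_if_unbounded:
  assumes pos: "\<And>k. 0 < \<tau> k" and unbounded: "\<And>n::nat. \<exists>k. real n < arrival \<tau> k"
  shows "regular_arrivals \<tau>"
  unfolding regular_arrivals_def
proof (intro conjI allI)
  fix T :: real
  obtain n :: nat where n: "T \<le> real n" using real_arch_simple by blast
  obtain k0 where k0: "real n < arrival \<tau> k0" using unbounded by blast
  have "{k. arrival \<tau> k \<le> T} \<subseteq> {..<k0}"
    using arrival_mono[of \<tau> k0] pos k0 n by (force simp: not_less[symmetric])
  then show "finite {k. arrival \<tau> k \<le> T}" using finite_subset by blast
qed (use pos in simp)

lemma regular_arrivals_tail:
  assumes "regular_arrivals \<tau>" shows "regular_arrivals (\<lambda>n. \<tau> (Suc n))"
  unfolding regular_arrivals_def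
proof (intro conjI allI)
  fix T
  have "finite (Suc -` {k. arrival \<tau> k \<le> T + \<tau> 0})"
    using assms by (intro finite_vimageI) (auto simp: regular_arrivals_def)
  moreover have "arrival \<tau> (Suc k) = \<tau> 0 + arrival (\<lambda>n. \<tau> (Suc n)) k" for k
    unfolding arrival_def by (subst sum.lessThan_Suc_shift) simp
  ultimately show "finite {k. arrival (\<lambda>n. \<tau> (Suc n)) k \<le> T}"
    by (simp add: vimage_def algebra_simps)
qed (use assms in \<open>simp add: regular_arrivals_def\<close>)

lemma pcount_case_nat:
  assumes "0 < x" "regular_arrivals \<tau>"
  shows "pcount (case_nat x \<tau>) s = (if x \<le> s then Suc (pcount \<tau> (s - x)) else 0)"
proof -
  have "{k. 1 \<le> k \<and> arrival (case_nat x \<tau>) k \<le> s} = Suc ` {k. arrival \<tau> k \<le> s - x}"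
    by (auto simp: image_iff arrival_case_nat_Suc Suc_le_eq gr0_conv_Suc algebra_simps)
  then have card: "pcount (case_nat x \<tau>) s = card {k. arrival \<tau> k \<le> s - x}"
    unfolding pcount_def by (simp add: card_image)
  show ?thesis
  proof (cases "x \<le> s")
    case True
    have "{k. arrival \<tau> k \<le> s - x} = insert 0 {k. 1 \<le> k \<and> arrival \<tau> k \<le> s - x}"
      using True by auto
    moreover have "finite {k. arrival \<tau> k \<le> s - x}"
      using assms(2) by (simp add: regular_arrivals_def)
    ultimately show ?thesis using True card by (simp add: pcount_def)
  next
    case False
    have "s - x < arrival \<tau> k" for k
      using False arrival_nonneg[of \<tau> k] assms(2) by (simp add: regular_arrivals_def)
    then have "{k. arrival \<tau> k \<le> s - x} = {}"
      by (auto simp: not_le)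
    then show ?thesis using False card by simp
  qed
qed

definition unit_dir :: "int \<Rightarrow> real \<times> real" where
  "unit_dir j = (cos (pi * of_int j / 2), sin (pi * of_int j / 2))"

lemma unit_dir_mod: "unit_dir j = unit_dir (j mod 4)"
proof -
  have "real_of_int j = of_int (j mod 4) + 4 * of_int (j div 4)"
    by (metis mod_mult_div_eq of_int_add of_int_mult of_int_numeral add.commute)
  then have "pi * of_int j / 2 = pi * of_int (j mod 4) / 2 + (2 * pi) * of_int (j div 4)"
    by (simp add: field_simps)
  then show ?thesis unfolding unit_dir_def
    by (simp only: cos_add sin_add cos_int_2pin sin_int_2pin) simp
qed

lemma unit_dir_0: "unit_dir 0 = (1, 0)" and unit_dir_1: "unit_dir 1 = (0, 1)"
  and unit_dir_2: "unit_dir 2 = (-1, 0)" and unit_dir_3: "unit_dir 3 = (0, -1)"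
proof -
  have "pi * of_int 3 / 2 = pi / 2 + pi" by simp
  then show "unit_dir 3 = (0, -1)" unfolding unit_dir_def
    by (simp only: cos_periodic_pi sin_periodic_pi) simp
qed (simp_all add: unit_dir_def)

lemma unit_dir_minus_1: "unit_dir (-1) = (0, -1)"
  by (subst unit_dir_mod) (simp add: unit_dir_3)

lemma unit_dir_cases: "unit_dir j \<in> {(1, 0), (0, 1), (-1, 0), (0, -1)}"
proof -
  have "j mod 4 \<in> {0, 1, 2, 3}" by auto
  then show ?thesis
    by (subst unit_dir_mod) (auto simp: unit_dir_0 unit_dir_1 unit_dir_2 unit_dir_3)
qed

lemma fst_plus_snd_unit_dir_le: "fst (unit_dir j) + snd (unit_dir j) \<le> 1"
  using unit_dir_cases[of j] by auto

lemma finite_range_unit_dir: "finite (range unit_dir)"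
proof (rule finite_subset)
  show "range unit_dir \<subseteq> {(1, 0), (0, 1), (-1, 0), (0, -1)}"
    using unit_dir_cases by blast
qed simp

section \<open>The path and the edge term\<close>

definition heading :: "int \<Rightarrow> sample \<Rightarrow> real \<Rightarrow> real \<times> real" where
  "heading j \<omega> s = unit_dir (dir_index_from j (snd \<omega>) (pcount (fst \<omega>) s))"

lemma Dir_eq_heading: "Dir \<omega> s = heading (int (fst \<omega>)) (snd \<omega>) s"
  unfolding Dir_def heading_def unit_dir_def by (simp add: dir_index_eq_from Let_def)

lemma heading_case_nat:
  assumes "0 < x" "regular_arrivals \<tau>"
  shows "heading j (case_nat x \<tau>, case_nat b u) s =
     (if x \<le> s then heading (turn j b) (\<tau>, u) (s - x) else unit_dir j)"
  unfolding heading_def using assms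
  by (simp add: pcount_case_nat dir_index_from_case_nat del: dir_index_from.simps(2))

text \<open>The common \<open>\<sigma>\<close>-algebra of all \<open>sample_space lam p\<close> defined below, so that
  measurability is proved once, independently of the parameters.\<close>

definition sample_borel :: "sample measure" where
  "sample_borel = PiM UNIV (\<lambda>_. lborel) \<Otimes>\<^sub>M PiM UNIV (\<lambda>_. count_space UNIV)"

lemma measurable_arrival [measurable]:
  assumes [measurable]: "\<And>i. (\<lambda>x. T x i) \<in> borel_measurable M"
  shows "(\<lambda>x. arrival (T x) k) \<in> borel_measurable M"
  unfolding arrival_def by measurable

lemma measurable_pcount [measurable]:
  assumes [measurable]: "\<And>i. (\<lambda>x. T x i) \<in> borel_measurable M" "S \<in> borel_measurable M"
  shows "(\<lambda>x. pcount (T x) (S x)) \<in> measurable M (count_space UNIV)"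
  unfolding pcount_def by (rule measurable_card) simp

lemma measurable_turn [measurable]:
  assumes [measurable]: "D \<in> measurable M (count_space UNIV)" "B \<in> measurable M (count_space UNIV)"
  shows "(\<lambda>x. turn (D x) (B x)) \<in> measurable M (count_space UNIV)"
proof -
  have "(\<lambda>x. (\<lambda>d x. turn d (B x)) (D x) x) \<in> measurable M (count_space UNIV)"
    by (rule measurable_compose_countable'[where I=UNIV]) auto
  then show ?thesis by simp
qed

lemma measurable_dir_index_from [measurable]:
  assumes [measurable]: "\<And>i. (\<lambda>x. U x i) \<in> measurable M (count_space UNIV)"
  shows "(\<lambda>x. dir_index_from j (U x) k) \<in> measurable M (count_space UNIV)"
  by (induction k) simp_all

lemma measurable_heading:
  fixes h :: "real \<times> real \<Rightarrow> 'b::topological_space"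
  assumes [measurable]: "\<And>i. (\<lambda>x. T x i) \<in> borel_measurable M"
    "\<And>i. (\<lambda>x. U x i) \<in> measurable M (count_space UNIV)" "S \<in> borel_measurable M"
  shows "(\<lambda>x. h (heading j (T x, U x) (S x))) \<in> borel_measurable M"
proof -
  have f: "(\<lambda>x. h (unit_dir (dir_index_from j (U x) n))) \<in> borel_measurable M" if "n \<in> UNIV" for n
  proof -
    have "(\<lambda>x. dir_index_from j (U x) n) \<in> measurable M (count_space UNIV)" by simp
    from measurable_compose[OF this, of "\<lambda>d. h (unit_dir d)" borel] show ?thesis by simp
  qed
  have g: "(\<lambda>x. pcount (T x) (S x)) \<in> measurable M (count_space UNIV)" by simp
  have "(\<lambda>x. (\<lambda>n x. h (unit_dir (dir_index_from j (U x) n))) (pcount (T x) (S x)) x) \<in> borel_measurable M"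
    by (rule measurable_compose_countable'[OF f g countableI_type])
  then show ?thesis by (simp add: heading_def)
qed

definition heading_integral :: "(real \<times> real \<Rightarrow> real) \<Rightarrow> int \<Rightarrow> sample \<Rightarrow> real \<Rightarrow> real" where
  "heading_integral h j \<omega> t = integral {0..t} (\<lambda>s. h (heading j \<omega> s))"

lemma
  fixes h :: "real \<times> real \<Rightarrow> real"
  shows integrable_on_heading: "(\<lambda>s. h (heading j \<omega> s)) integrable_on {a..b}"
    and heading_integral_lborel:
      "heading_integral h j \<omega> t = (\<integral>s. indicator {0..t} s * h (heading j \<omega> s) \<partial>lborel)"
proof -
  have m: "(\<lambda>s. h (heading j \<omega> s)) \<in> borel_measurable borel"
    by (rule measurable_heading[where T="\<lambda>_. fst \<omega>" and U="\<lambda>_. snd \<omega>" and S="\<lambda>s. s", simplified])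
      simp_all
  define B where "B = Max ((\<lambda>v. \<bar>h v\<bar>) ` range unit_dir)"
  have "norm (h (heading j \<omega> s)) \<le> B" for s
    unfolding heading_def B_def real_norm_def by (rule Max_ge) (simp_all add: finite_range_unit_dir)
  from integrable_on_Icc_bounded_measurable[OF m this] integral_Icc_bounded_measurable[OF m this]
  show "(\<lambda>s. h (heading j \<omega> s)) integrable_on {a..b}"
    "heading_integral h j \<omega> t = (\<integral>s. indicator {0..t} s * h (heading j \<omega> s) \<partial>lborel)"
    by (simp_all add: heading_integral_def)
qed

lemma measurable_heading_integral [measurable]:
  "(\<lambda>x. heading_integral h j (fst x) (snd x)) \<in> borel_measurable (sample_borel \<Otimes>\<^sub>M borel)"
proof -
  let ?M = "(sample_borel \<Otimes>\<^sub>M (borel :: real measure)) \<Otimes>\<^sub>M (borel :: real measure)"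
  have [measurable]: "(\<lambda>x. h (heading j (fst (fst x)) (snd x))) \<in> borel_measurable ?M"
    by (rule measurable_heading[where T="\<lambda>x. fst (fst (fst x))" and U="\<lambda>x. snd (fst (fst x))"
          and S=snd, simplified]) (simp_all add: sample_borel_def)
  have "{x \<in> space ?M. snd x \<in> {0..snd (fst x)}} =
      {x \<in> space ?M. 0 \<le> snd x} \<inter> {x \<in> space ?M. snd x \<le> snd (fst x)}"
    by auto
  also have "\<dots> \<in> sets ?M"
    by (intro sets.Int borel_measurable_le measurable_snd measurable_const
        measurable_compose[OF measurable_fst]) simp
  finally have [measurable]: "(\<lambda>x. indicator {0..snd (fst x)} (snd x) :: real) \<in> borel_measurable ?M"
    by (rule borel_measurable_indicator')
  show ?thesis unfolding heading_integral_lborel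
    by (rule lborel.borel_measurable_lebesgue_integral
        [where f="\<lambda>x s. indicator {0..snd x} s * h (heading j (fst x) s)"]) simp
qed

lemma heading_integral_case_nat:
  assumes x: "0 < x" and \<tau>: "regular_arrivals \<tau>" and t: "0 \<le> t"
  shows "heading_integral h j (case_nat x \<tau>, case_nat b u) t =
    (if t < x then t * h (unit_dir j)
     else x * h (unit_dir j) + heading_integral h (turn j b) (\<tau>, u) (t - x))"
proof -
  let ?f = "\<lambda>s. h (heading j (case_nat x \<tau>, case_nat b u) s)"
  have before: "?f s = h (unit_dir j)" if "s < x" for s
    using that by (simp add: heading_case_nat[OF x \<tau>])
  show ?thesis
  proof (cases "t < x")
    case True
    then have "integral {0..t} ?f = integral {0..t} (\<lambda>s. h (unit_dir j))"
      by (intro integral_cong before) simp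
    then show ?thesis using True t by (simp add: heading_integral_def)
  next
    case False
    have "integral {0..t} ?f = integral {0..x} ?f + integral {x..t} ?f"
      by (rule Henstock_Kurzweil_Integration.integral_combine[symmetric])
         (use False x in \<open>auto intro: integrable_on_heading\<close>)
    moreover have "integral {0..x} ?f = integral {0..x} (\<lambda>s. h (unit_dir j))"
      by (rule integral_spike[of "{x}"]) (auto simp: before less_le)
    moreover have "integral {x..t} ?f = integral {0..t - x} (\<lambda>s. ?f (x + s))"
      using integral_shift_Icc_real[of 0 "t - x" ?f x] by (simp add: o_def)
    moreover have "integral {0..t - x} (\<lambda>s. ?f (x + s)) =
        integral {0..t - x} (\<lambda>s. h (heading (turn j b) (\<tau>, u) s))"
      by (rule integral_cong) (simp add: heading_case_nat[OF x \<tau>])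
    ultimately show ?thesis using False x by (simp add: heading_integral_def)
  qed
qed

lemma heading_integral_fst_plus_snd_le:
  assumes "0 \<le> t" shows "heading_integral fst j \<omega> t + heading_integral snd j \<omega> t \<le> t"
proof -
  have "heading_integral fst j \<omega> t + heading_integral snd j \<omega> t =
      integral {0..t} (\<lambda>s. fst (heading j \<omega> s) + snd (heading j \<omega> s))"
    unfolding heading_integral_def by (intro integral_add[symmetric] integrable_on_heading)
  also have "\<dots> \<le> integral {0..t} (\<lambda>s. 1)"
    by (intro integral_le integrable_add integrable_on_heading)
       (auto simp: heading_def fst_plus_snd_unit_dir_le)
  finally show ?thesis using assms by simp
qed

definition edge_term :: "real \<Rightarrow> int \<Rightarrow> sample \<Rightarrow> real \<Rightarrow> complex" where
  "edge_term a j \<omega> t =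
    (if heading_integral fst j \<omega> t + heading_integral snd j \<omega> t = t
     then cis (a * (heading_integral fst j \<omega> t - heading_integral snd j \<omega> t)) else 0)"

lemma norm_edge_term_le: "norm (edge_term a j \<omega> t) \<le> 1"
  by (simp add: edge_term_def)

lemma measurable_edge_term [measurable]:
  "(\<lambda>x. edge_term a j (fst x) (snd x)) \<in> borel_measurable (sample_borel \<Otimes>\<^sub>M borel)"
  unfolding edge_term_def cis_conv_exp by measurable

lemma orth_integrand_eq_edge_term:
  assumes "c \<noteq> 0"
  shows "indicator {\<omega>. posX c \<omega> t + posY c \<omega> t = c * t} \<omega> *\<^sub>R cis (\<alpha> * (posX c \<omega> t - posY c \<omega> t))
    = edge_term (\<alpha> * c) (int (fst \<omega>)) (snd \<omega>) t"
proof -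
  let ?X = "heading_integral fst (int (fst \<omega>)) (snd \<omega>) t"
    and ?Y = "heading_integral snd (int (fst \<omega>)) (snd \<omega>) t"
  have X: "posX c \<omega> t = c * ?X" and Y: "posY c \<omega> t = c * ?Y"
    by (simp_all add: posX_def posY_def heading_integral_def Dir_eq_heading)
  have "c * ?X + c * ?Y = c * t \<longleftrightarrow> ?X + ?Y = t"
    using assms by (simp flip: distrib_left)
  then show ?thesis
    unfolding edge_term_def by (simp add: X Y indicator_def mult.assoc right_diff_distrib)
qed

lemma edge_term_case_nat:
  assumes x: "0 < x" and \<tau>: "regular_arrivals \<tau>" and t: "0 \<le> t"
    and edge: "fst (unit_dir j) + snd (unit_dir j) = 1"
  defines "e \<equiv> fst (unit_dir j) - snd (unit_dir j)"
  shows "edge_term a j (case_nat x \<tau>, case_nat b u) t =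
    (if t < x then cis (a * e * t) else cis (a * e * x) * edge_term a (turn j b) (\<tau>, u) (t - x))"
proof (cases "t < x")
  case True
  have "t * fst (unit_dir j) + t * snd (unit_dir j) = t"
    using edge by (metis distrib_left mult.right_neutral)
  then show ?thesis using True
    unfolding edge_term_def heading_integral_case_nat[OF x \<tau> t] e_def by (simp add: algebra_simps)
next
  case False
  let ?X = "heading_integral fst (turn j b) (\<tau>, u) (t - x)"
    and ?Y = "heading_integral snd (turn j b) (\<tau>, u) (t - x)"
  have "x * fst (unit_dir j) + x * snd (unit_dir j) = x"
    using edge by (metis distrib_left mult.right_neutral)
  then have "(x * fst (unit_dir j) + ?X) + (x * snd (unit_dir j) + ?Y) = t \<longleftrightarrow> ?X + ?Y = t - x"
    by linarith
  moreover have "cis (a * ((x * fst (unit_dir j) + ?X) - (x * snd (unit_dir j) + ?Y))) =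
      cis (a * e * x) * cis (a * (?X - ?Y))"
    by (simp add: cis_mult e_def algebra_simps)
  ultimately show ?thesis using False
    unfolding edge_term_def heading_integral_case_nat[OF x \<tau> t] by simp
qed

lemma edge_term_eq_0:
  assumes \<tau>: "regular_arrivals \<tau>" and t: "0 < t"
    and off_edge: "fst (unit_dir j) + snd (unit_dir j) = -1"
  shows "edge_term a j (\<tau>, u) t = 0"
proof -
  let ?x = "\<tau> 0" and ?\<tau> = "\<lambda>n. \<tau> (Suc n)" and ?u = "\<lambda>n. u (Suc n)"
  have x: "0 < ?x" and \<tau>': "regular_arrivals ?\<tau>"
    using \<tau> regular_arrivals_tail[OF \<tau>] by (simp_all add: regular_arrivals_def)
  have split: "(\<tau>, u) = (case_nat ?x ?\<tau>, case_nat (u 0) ?u)"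
    by (auto simp: fun_eq_iff split: nat.split)
  let ?S = "\<lambda>h. heading_integral h (turn j (u 0)) (?\<tau>, ?u) (t - ?x)"
  have "heading_integral fst j (\<tau>, u) t + heading_integral snd j (\<tau>, u) t =
      (if t < ?x then t * (fst (unit_dir j) + snd (unit_dir j))
       else ?x * (fst (unit_dir j) + snd (unit_dir j)) + (?S fst + ?S snd))"
    unfolding split heading_integral_case_nat[OF x \<tau>' less_imp_le[OF t]] by (simp add: algebra_simps)
  also have "\<dots> < t"
    using t x off_edge heading_integral_fst_plus_snd_le[of "t - ?x" "turn j (u 0)" "(?\<tau>, ?u)"]
    by auto
  finally show ?thesis by (simp add: edge_term_def)
qed

section \<open>The sample space\<close>

abbreviation exp_law :: "real \<Rightarrow> real measure" where
  "exp_law lam \<equiv> density lborel (exponential_density lam)"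

abbreviation exp_seq :: "real \<Rightarrow> (nat \<Rightarrow> real) measure" where
  "exp_seq lam \<equiv> PiM UNIV (\<lambda>_. exp_law lam)"

abbreviation coin_seq :: "real \<Rightarrow> (nat \<Rightarrow> bool) measure" where
  "coin_seq p \<equiv> PiM UNIV (\<lambda>_. measure_pmf (bernoulli_pmf p))"

definition sample_space :: "real \<Rightarrow> real \<Rightarrow> sample measure" where
  "sample_space lam p = exp_seq lam \<Otimes>\<^sub>M coin_seq p"

lemma orth_space_eq: "orth_space lam p = measure_pmf (pmf_of_set {0..<4}) \<Otimes>\<^sub>M sample_space lam p"
  unfolding orth_space_def sample_space_def ..

lemma prob_space_sample_space: "0 < lam \<Longrightarrow> prob_space (sample_space lam p)"
  unfolding sample_space_def
  by (intro prob_space_pair prob_space_PiM prob_space_exponential_density prob_space_measure_pmf)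

lemma space_sample_space [simp]: "space (sample_space lam p) = UNIV"
  by (simp add: sample_space_def space_pair_measure space_PiM)

lemma sets_sample_space: "sets (sample_space lam p) = sets sample_borel"
  unfolding sample_space_def sample_borel_def
  by (intro sets_pair_measure_cong sets_PiM_cong) (simp_all add: sets_measure_pmf_count_space)

lemma measurable_sample_space: "measurable (sample_space lam p) N = measurable sample_borel N"
  by (rule measurable_cong_sets[OF sets_sample_space refl])

lemma integral_coin_seq_first_step:
  fixes g :: "(nat \<Rightarrow> bool) \<Rightarrow> 'b::{banach, second_countable_topology}"
  assumes p: "0 \<le> p" "p \<le> 1"
    and [measurable]: "g \<in> borel_measurable (coin_seq p)" and bound: "\<And>u. norm (g u) \<le> K"
  shows "(\<integral>u. g u \<partial>coin_seq p) =
    p *\<^sub>R (\<integral>u. g (case_nat True u) \<partial>coin_seq p) + (1 - p) *\<^sub>R (\<integral>u. g (case_nat False u) \<partial>coin_seq p)"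
proof -
  have "(\<integral>u. g u \<partial>coin_seq p) = (\<integral>b. (\<integral>u. g (case_nat b u) \<partial>coin_seq p) \<partial>measure_pmf (bernoulli_pmf p))"
    by (rule measure_pmf.integral_PiM_case_nat[where K=K]) (simp_all add: bound)
  also have "\<dots> = (\<Sum>b\<in>{True, False}. pmf (bernoulli_pmf p) b *\<^sub>R (\<integral>u. g (case_nat b u) \<partial>coin_seq p))"
    by (rule integral_measure_pmf) auto
  finally show ?thesis using p by simp
qed

lemma integral_sample_space_first_step:
  fixes f :: "sample \<Rightarrow> complex"
  assumes lam: "0 < lam" and p: "0 \<le> p" "p \<le> 1"
    and f: "f \<in> borel_measurable sample_borel" and bound: "\<And>\<omega>. norm (f \<omega>) \<le> K"
  shows "(\<integral>\<omega>. f \<omega> \<partial>sample_space lam p) =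
     p *\<^sub>R (\<integral>x. (\<integral>\<omega>. f (case_nat x (fst \<omega>), case_nat True (snd \<omega>)) \<partial>sample_space lam p) \<partial>exp_law lam)
   + (1 - p) *\<^sub>R (\<integral>x. (\<integral>\<omega>. f (case_nat x (fst \<omega>), case_nat False (snd \<omega>)) \<partial>sample_space lam p) \<partial>exp_law lam)"
proof -
  interpret E: prob_space "exp_law lam" using prob_space_exponential_density[OF lam] .
  interpret SE: sequence_space "exp_law lam" ..
  interpret SB: sequence_space "measure_pmf (bernoulli_pmf p)" ..
  interpret P: pair_sigma_finite "exp_seq lam" "coin_seq p" ..
  interpret PP: prob_space "exp_seq lam \<Otimes>\<^sub>M coin_seq p" by (rule prob_space_pair) unfold_locales
  have [measurable]: "f \<in> borel_measurable (exp_seq lam \<Otimes>\<^sub>M coin_seq p)"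
    unfolding sample_space_def[symmetric] measurable_sample_space by (rule f)
  define A where "A = (\<lambda>\<tau> b. \<integral>u. f (\<tau>, case_nat b u) \<partial>coin_seq p)"
  have [measurable]: "(\<lambda>\<tau>. A \<tau> b) \<in> borel_measurable (exp_seq lam)" for b
    unfolding A_def by measurable
  have A_bound: "norm (A \<tau> b) \<le> K" for \<tau> b
    unfolding A_def by (rule SB.norm_integral_le_const) (rule bound)
  have A_int: "integrable (exp_seq lam) (\<lambda>\<tau>. A \<tau> b)" for b
    by (rule SE.integrable_const_bound[where B=K]) (simp_all add: A_bound)
  have integral_A: "(\<integral>\<tau>. A \<tau> b \<partial>exp_seq lam) =
     (\<integral>x. (\<integral>\<omega>. f (case_nat x (fst \<omega>), case_nat b (snd \<omega>)) \<partial>sample_space lam p) \<partial>exp_law lam)" for b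
  proof -
    have "(\<integral>\<tau>. A \<tau> b \<partial>exp_seq lam) = (\<integral>x. (\<integral>\<tau>. A (case_nat x \<tau>) b \<partial>exp_seq lam) \<partial>exp_law lam)"
      by (rule E.integral_PiM_case_nat[where K=K]) (simp_all add: A_bound)
    also have "\<dots> = (\<integral>x. (\<integral>\<omega>. f (case_nat x (fst \<omega>), case_nat b (snd \<omega>)) \<partial>sample_space lam p) \<partial>exp_law lam)"
      unfolding A_def sample_space_def
      by (intro Bochner_Integration.integral_cong refl P.integral_fst'[where f="\<lambda>\<omega>. f (case_nat _ (fst \<omega>), case_nat b (snd \<omega>))", simplified]
          PP.integrable_const_bound[where B=K]) (simp_all add: bound)
    finally show ?thesis .
  qed
  have "(\<integral>\<omega>. f \<omega> \<partial>sample_space lam p) = (\<integral>\<tau>. \<integral>u. f (\<tau>, u) \<partial>coin_seq p \<partial>exp_seq lam)"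
    unfolding sample_space_def
    by (rule P.integral_fst'[symmetric], rule PP.integrable_const_bound[where B=K]) (simp_all add: bound)
  also have "\<dots> = (\<integral>\<tau>. p *\<^sub>R A \<tau> True + (1 - p) *\<^sub>R A \<tau> False \<partial>exp_seq lam)"
    unfolding A_def
    by (intro Bochner_Integration.integral_cong refl integral_coin_seq_first_step[OF p, where K=K])
       (simp_all add: bound space_PiM)
  also have "\<dots> = p *\<^sub>R (\<integral>\<tau>. A \<tau> True \<partial>exp_seq lam) + (1 - p) *\<^sub>R (\<integral>\<tau>. A \<tau> False \<partial>exp_seq lam)"
    using A_int by simp
  finally show ?thesis by (simp only: integral_A)
qed

lemma AE_exp_law_pos: "0 < lam \<Longrightarrow> AE x in exp_law lam. 0 < x"
proof -
  have "AE x in lborel. (x::real) \<noteq> 0" by (rule AE_lborel_singleton)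
  then have "AE x in lborel. 0 < ennreal (exponential_density lam x) \<longrightarrow> 0 < x"
    by eventually_elim (auto simp: exponential_density_def)
  then show ?thesis by (subst AE_density) simp_all
qed

lemma AE_exp_law_neq: "AE x in exp_law lam. x \<noteq> t"
proof -
  have "AE x in lborel. (x::real) \<noteq> t" by (rule AE_lborel_singleton)
  then have "AE x in lborel. 0 < ennreal (exponential_density lam x) \<longrightarrow> x \<noteq> t"
    by eventually_elim auto
  then show ?thesis by (subst AE_density) simp_all
qed

lemma measure_exp_law_greaterThan:
  assumes lam: "0 < lam" and t: "0 \<le> t"
  shows "measure (exp_law lam) {t<..} = exp (- lam * t)"
proof -
  interpret E: prob_space "exp_law lam" using prob_space_exponential_density[OF lam] .
  have "emeasure (exp_law lam) {..t} = ennreal (1 - exp (- lam * t))"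
    using emeasure_erlang_density[OF lam, of 0 t] t by (simp add: erlang_CDF_0)
  then have "measure (exp_law lam) {..t} = 1 - exp (- lam * t)"
    using t lam by (simp add: E.emeasure_eq_measure)
  moreover have "measure (exp_law lam) (space (exp_law lam) - {..t}) = 1 - measure (exp_law lam) {..t}"
    by (rule E.prob_compl) simp
  moreover have "space (exp_law lam) - {..t} = {t<..}" by auto
  ultimately show ?thesis by simp
qed

lemma integral_exp_law_atMost:
  fixes G :: "real \<Rightarrow> complex"
  assumes lam: "0 < lam" and G: "G \<in> borel_measurable borel" and bound: "\<And>x. norm (G x) \<le> B"
  shows "(\<integral>x. indicator {..t} x *\<^sub>R G x \<partial>exp_law lam) = lam *\<^sub>R integral {0..t} (\<lambda>x. exp (- lam * x) *\<^sub>R G x)"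
proof -
  have "(\<integral>x. indicator {..t} x *\<^sub>R G x \<partial>exp_law lam) =
      (\<integral>x. exponential_density lam x *\<^sub>R (indicator {..t} x *\<^sub>R G x) \<partial>lborel)"
    by (rule integral_density) (use G in \<open>auto simp: exponential_density_nonneg[OF lam]\<close>)
  also have "\<dots> = (\<integral>x. indicator {0..t} x *\<^sub>R ((lam * exp (- lam * x)) *\<^sub>R G x) \<partial>lborel)"
    by (rule Bochner_Integration.integral_cong) (auto simp: exponential_density_def indicator_def mult.commute)
  also have "\<dots> = integral {0..t} (\<lambda>x. (lam * exp (- lam * x)) *\<^sub>R G x)"
  proof (rule integral_Icc_bounded_measurable[symmetric, where B="lam * B"])
    fix x :: real assume "x \<in> {0..t}"
    then have "lam * exp (- lam * x) * norm (G x) \<le> lam * 1 * B"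
      using lam bound[of x] by (intro mult_mono) auto
    then show "norm ((lam * exp (- lam * x)) *\<^sub>R G x) \<le> lam * B"
      using lam by simp
  qed (use G in simp)
  finally show ?thesis by (simp add: integral_cmul[symmetric] scaleR_scaleR del: integral_cmul)
qed

lemma integral_exp_law_split:
  fixes Q G :: "real \<Rightarrow> complex"
  assumes lam: "0 < lam" and t: "0 \<le> t"
    and Q: "Q \<in> borel_measurable borel" and G: "G \<in> borel_measurable borel" and bound: "\<And>x. norm (G x) \<le> B"
    and Q_eq: "AE x in exp_law lam. Q x = (if t < x then K else G x)"
  shows "(\<integral>x. Q x \<partial>exp_law lam) = exp (- lam * t) *\<^sub>R K + lam *\<^sub>R integral {0..t} (\<lambda>x. exp (- lam * x) *\<^sub>R G x)"
proof -
  interpret E: prob_space "exp_law lam" using prob_space_exponential_density[OF lam] .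
  have "0 \<le> B" using bound[of 0] norm_ge_zero order_trans by blast
  have int_ind: "integrable (exp_law lam) (indicator {t<..} :: real \<Rightarrow> real)"
    by (rule E.integrable_const_bound[where B=1]) (auto simp: indicator_def)
  then have int_K: "integrable (exp_law lam) (\<lambda>x. indicator {t<..} x *\<^sub>R K)"
    by simp
  have int_G: "integrable (exp_law lam) (\<lambda>x. indicator {..t} x *\<^sub>R G x)"
    by (rule E.integrable_const_bound[where B=B]) (use G bound \<open>0 \<le> B\<close> in \<open>auto simp: indicator_def\<close>)
  have "(\<integral>x. Q x \<partial>exp_law lam) = (\<integral>x. indicator {t<..} x *\<^sub>R K + indicator {..t} x *\<^sub>R G x \<partial>exp_law lam)"
    by (rule integral_cong_AE) (use Q G Q_eq in \<open>auto simp: indicator_def elim: AE_mp\<close>)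
  also have "\<dots> = measure (exp_law lam) {t<..} *\<^sub>R K + (\<integral>x. indicator {..t} x *\<^sub>R G x \<partial>exp_law lam)"
    using int_K int_G int_ind by simp
  finally show ?thesis
    using measure_exp_law_greaterThan[OF lam t] integral_exp_law_atMost[OF lam G bound] by simp
qed

lemma nn_integral_exp_law_exp_neg:
  assumes lam: "0 < lam"
  shows "(\<integral>\<^sup>+x. ennreal (exp (- x)) \<partial>exp_law lam) = ennreal (lam / (lam + 1))"
proof -
  interpret E1: prob_space "exp_law (lam + 1)" using prob_space_exponential_density lam by simp
  have "(\<integral>\<^sup>+x. ennreal (exp (- x)) \<partial>exp_law lam) =
      (\<integral>\<^sup>+x. ennreal (exponential_density lam x) * ennreal (exp (- x)) \<partial>lborel)"
    by (subst nn_integral_density) simp_all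
  also have "\<dots> = (\<integral>\<^sup>+x. ennreal (lam / (lam + 1)) * ennreal (exponential_density (lam + 1) x) \<partial>lborel)"
  proof (rule nn_integral_cong)
    fix x :: real
    have "exponential_density lam x * exp (- x) = lam / (lam + 1) * exponential_density (lam + 1) x"
      using lam by (auto simp: exponential_density_def field_simps exp_add[symmetric] exp_minus_inverse)
    then show "ennreal (exponential_density lam x) * ennreal (exp (- x)) =
        ennreal (lam / (lam + 1)) * ennreal (exponential_density (lam + 1) x)"
      using lam by (simp add: ennreal_mult'[symmetric] ennreal_mult[symmetric] exponential_density_nonneg)
  qed
  also have "\<dots> = ennreal (lam / (lam + 1)) * (\<integral>\<^sup>+x. ennreal (exponential_density (lam + 1) x) \<partial>lborel)"
    by (rule nn_integral_cmult) simp
  also have "(\<integral>\<^sup>+x. ennreal (exponential_density (lam + 1) x) \<partial>lborel) = 1"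
    using E1.emeasure_space_1 by (subst (asm) emeasure_density) simp_all
  finally show ?thesis by simp
qed

lemma nn_integral_exp_seq_exp_neg_arrival:
  assumes lam: "0 < lam"
  shows "(\<integral>\<^sup>+\<tau>. ennreal (exp (- arrival \<tau> k)) \<partial>exp_seq lam) = ennreal ((lam / (lam + 1)) ^ k)"
proof -
  interpret E: prob_space "exp_law lam" using prob_space_exponential_density[OF lam] .
  interpret SE: sequence_space "exp_law lam" ..
  have [measurable]: "(\<lambda>\<tau>. arrival \<tau> k) \<in> borel_measurable (exp_seq lam)" for k
    by (rule measurable_arrival) simp
  show ?thesis
  proof (induction k)
    case 0
    show ?case using SE.emeasure_space_1 by (simp add: space_PiM)
  next
    case (Suc k)
    have "(\<integral>\<^sup>+\<tau>. ennreal (exp (- arrival \<tau> (Suc k))) \<partial>exp_seq lam) =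
       (\<integral>\<^sup>+x. (\<integral>\<^sup>+\<tau>. ennreal (exp (- arrival (case_nat x \<tau>) (Suc k))) \<partial>exp_seq lam) \<partial>exp_law lam)"
      by (rule E.nn_integral_PiM_case_nat) measurable
    also have "\<dots> = (\<integral>\<^sup>+x. ennreal (exp (- x)) * (\<integral>\<^sup>+\<tau>. ennreal (exp (- arrival \<tau> k)) \<partial>exp_seq lam) \<partial>exp_law lam)"
    proof (intro nn_integral_cong)
      fix x :: real
      have "(\<integral>\<^sup>+\<tau>. ennreal (exp (- arrival (case_nat x \<tau>) (Suc k))) \<partial>exp_seq lam) =
         (\<integral>\<^sup>+\<tau>. ennreal (exp (- x)) * ennreal (exp (- arrival \<tau> k)) \<partial>exp_seq lam)"
        by (rule nn_integral_cong) (simp add: arrival_case_nat_Suc ennreal_mult[symmetric] exp_add[symmetric])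
      also have "\<dots> = ennreal (exp (- x)) * (\<integral>\<^sup>+\<tau>. ennreal (exp (- arrival \<tau> k)) \<partial>exp_seq lam)"
        by (rule nn_integral_cmult) measurable
      finally show "(\<integral>\<^sup>+\<tau>. ennreal (exp (- arrival (case_nat x \<tau>) (Suc k))) \<partial>exp_seq lam) =
         ennreal (exp (- x)) * (\<integral>\<^sup>+\<tau>. ennreal (exp (- arrival \<tau> k)) \<partial>exp_seq lam)" .
    qed
    also have "\<dots> = (\<integral>\<^sup>+x. ennreal (exp (- x)) \<partial>exp_law lam) * ennreal ((lam / (lam + 1)) ^ k)"
      unfolding Suc by (rule nn_integral_multc) simp
    also have "\<dots> = ennreal ((lam / (lam + 1)) ^ Suc k)"
      using lam by (simp add: nn_integral_exp_law_exp_neg ennreal_mult[symmetric])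
    finally show ?case .
  qed
qed

text \<open>Markov's inequality for \<open>exp(-arrival \<tau> k)\<close>.\<close>

lemma measure_arrivals_bounded_le:
  assumes lam: "0 < lam"
  shows "measure (exp_seq lam) {\<tau>. \<forall>k. arrival \<tau> k \<le> x} \<le> exp x * (lam / (lam + 1)) ^ k"
proof -
  interpret E: prob_space "exp_law lam" using prob_space_exponential_density[OF lam] .
  interpret SE: sequence_space "exp_law lam" ..
  have [measurable]: "(\<lambda>\<tau>. arrival \<tau> k) \<in> borel_measurable (exp_seq lam)" for k
    by (rule measurable_arrival) simp
  define Z where "Z = {\<tau>. \<forall>k. arrival \<tau> k \<le> x}"
  have "{\<tau> \<in> space (exp_seq lam). \<forall>k. arrival \<tau> k \<le> x} \<in> sets (exp_seq lam)" by measurable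
  then have Z: "Z \<in> sets (exp_seq lam)" by (simp add: Z_def space_PiM)
  have "emeasure (exp_seq lam) Z = (\<integral>\<^sup>+\<tau>. indicator Z \<tau> \<partial>exp_seq lam)" using Z by simp
  also have "\<dots> \<le> (\<integral>\<^sup>+\<tau>. ennreal (exp x) * ennreal (exp (- arrival \<tau> k)) \<partial>exp_seq lam)"
  proof (rule nn_integral_mono)
    fix \<tau> :: "nat \<Rightarrow> real"
    show "indicator Z \<tau> \<le> ennreal (exp x) * ennreal (exp (- arrival \<tau> k))"
    proof (cases "\<tau> \<in> Z")
      case True
      then have "1 \<le> exp (x - arrival \<tau> k)" by (simp add: Z_def)
      then show ?thesis using True by (simp add: ennreal_mult[symmetric] exp_diff exp_minus field_simps)
    qed simp
  qed
  also have "\<dots> = ennreal (exp x) * ennreal ((lam / (lam + 1)) ^ k)"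
    by (subst nn_integral_cmult) (simp_all add: nn_integral_exp_seq_exp_neg_arrival[OF lam])
  finally show ?thesis
    using lam by (simp add: Z_def SE.emeasure_eq_measure ennreal_mult[symmetric] ennreal_le_iff)
qed

lemma AE_exp_seq_arrival_unbounded:
  assumes lam: "0 < lam" shows "AE \<tau> in exp_seq lam. \<exists>k. x < arrival \<tau> k"
proof -
  interpret E: prob_space "exp_law lam" using prob_space_exponential_density[OF lam] .
  interpret SE: sequence_space "exp_law lam" ..
  have [measurable]: "(\<lambda>\<tau>. arrival \<tau> k) \<in> borel_measurable (exp_seq lam)" for k
    by (rule measurable_arrival) simp
  define Z where "Z = {\<tau>. \<forall>k. arrival \<tau> k \<le> x}"
  have "{\<tau> \<in> space (exp_seq lam). \<forall>k. arrival \<tau> k \<le> x} \<in> sets (exp_seq lam)" by measurable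
  then have Z: "Z \<in> sets (exp_seq lam)" by (simp add: Z_def space_PiM)
  have "(\<lambda>k. exp x * (lam / (lam + 1)) ^ k) \<longlonglongrightarrow> 0"
    by (rule tendsto_mult_right_zero, rule LIMSEQ_power_zero) (use lam in simp)
  then have "measure (exp_seq lam) Z \<le> 0"
    by (rule LIMSEQ_le_const) (use measure_arrivals_bounded_le[OF lam] in \<open>auto simp: Z_def\<close>)
  then have "Z \<in> null_sets (exp_seq lam)"
    using Z by (simp add: SE.emeasure_eq_measure null_sets_def measure_nonneg antisym)
  then show ?thesis
    by (rule AE_I') (auto simp: Z_def not_less)
qed

lemma AE_sample_space_regular_arrivals:
  assumes lam: "0 < lam" shows "AE \<omega> in sample_space lam p. regular_arrivals (fst \<omega>)"
proof -
  interpret E: prob_space "exp_law lam" using prob_space_exponential_density[OF lam] .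
  interpret SE: sequence_space "exp_law lam" ..
  interpret SB: sequence_space "measure_pmf (bernoulli_pmf p)" ..
  have "AE \<tau> in exp_seq lam. 0 < \<tau> k" for k
    by (rule SE.AE_component) (simp_all add: AE_exp_law_pos[OF lam])
  then have "AE \<tau> in exp_seq lam. (\<forall>k. 0 < \<tau> k) \<and> (\<forall>n::nat. \<exists>k. real n < arrival \<tau> k)"
    using AE_exp_seq_arrival_unbounded[OF lam, of "real _"] by (simp add: AE_all_countable)
  then have "AE \<tau> in exp_seq lam. regular_arrivals \<tau>"
    by eventually_elim (simp add: regular_arrivals_if_unbounded)
  then have "AE \<tau> in distr (exp_seq lam \<Otimes>\<^sub>M coin_seq p) (exp_seq lam) fst. regular_arrivals \<tau>"
    by (simp only: SB.distr_pair_fst)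
  then show ?thesis
    unfolding sample_space_def by (rule AE_distrD[OF measurable_fst])
qed

section \<open>Renewal equations\<close>

definition edge_char :: "real \<Rightarrow> real \<Rightarrow> real \<Rightarrow> int \<Rightarrow> real \<Rightarrow> complex" where
  "edge_char a lam p j t = (\<integral>\<omega>. edge_term a j \<omega> t \<partial>sample_space lam p)"

lemma measurable_edge_term_at: "(\<lambda>\<omega>. edge_term a j \<omega> t) \<in> borel_measurable sample_borel"
  using measurable_compose[OF _ measurable_edge_term, of "\<lambda>\<omega>. (\<omega>, t)"] by simp

lemma measurable_edge_char:
  assumes lam: "0 < lam" shows "edge_char a lam p j \<in> borel_measurable borel"
proof -
  interpret P: prob_space "sample_space lam p" by (rule prob_space_sample_space[OF lam])
  have "(\<lambda>(t, \<omega>). edge_term a j \<omega> t) \<in> borel_measurable (borel \<Otimes>\<^sub>M sample_borel)"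
    using measurable_edge_term by (subst measurable_pair_swap_iff) (simp add: case_prod_beta)
  moreover have "sets (borel \<Otimes>\<^sub>M sample_space lam p) = sets (borel \<Otimes>\<^sub>M sample_borel)"
    by (rule sets_pair_measure_cong) (simp_all add: sets_sample_space)
  ultimately have "(\<lambda>(t, \<omega>). edge_term a j \<omega> t) \<in> borel_measurable (borel \<Otimes>\<^sub>M sample_space lam p)"
    by (subst measurable_cong_sets) auto
  then show ?thesis unfolding edge_char_def
    by (rule P.borel_measurable_lebesgue_integral[where f="\<lambda>t \<omega>. edge_term a j \<omega> t"])
qed

lemma norm_edge_char_le: "0 < lam \<Longrightarrow> norm (edge_char a lam p j t) \<le> 1"
  unfolding edge_char_def
  by (rule prob_space.norm_integral_le_const[OF prob_space_sample_space]) (simp_all add: norm_edge_term_le)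

lemma edge_char_eq_0:
  assumes lam: "0 < lam" and t: "0 < t" and off_edge: "fst (unit_dir j) + snd (unit_dir j) = -1"
  shows "edge_char a lam p j t = 0"
proof -
  have "edge_char a lam p j t = (\<integral>\<omega>. 0 \<partial>sample_space lam p)"
    unfolding edge_char_def
  proof (rule integral_cong_AE)
    show "AE \<omega> in sample_space lam p. edge_term a j \<omega> t = 0"
      using AE_sample_space_regular_arrivals[OF lam]
      by eventually_elim (metis edge_term_eq_0[OF _ t off_edge] prod.collapse)
  qed (simp_all add: measurable_sample_space measurable_edge_term_at)
  then show ?thesis by simp
qed

lemma integral_orth_space_edge_term:
  assumes lam: "0 < lam" and t: "0 < t"
  shows "(\<integral>\<omega>. edge_term a (int (fst \<omega>)) (snd \<omega>) t \<partial>orth_space lam p)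
      = (edge_char a lam p 0 t + edge_char a lam p 1 t) / 4"
proof -
  let ?U = "measure_pmf (pmf_of_set {0..<4::nat})"
  interpret P: prob_space "sample_space lam p" by (rule prob_space_sample_space[OF lam])
  interpret UP: pair_sigma_finite ?U "sample_space lam p" ..
  interpret UPP: prob_space "?U \<Otimes>\<^sub>M sample_space lam p" by (rule prob_space_pair) unfold_locales
  have "fst \<in> measurable (?U \<Otimes>\<^sub>M sample_space lam p) ?U" by (rule measurable_fst)
  then have fst: "fst \<in> measurable (?U \<Otimes>\<^sub>M sample_space lam p) (count_space UNIV)"
    by (simp add: measurable_cong_sets[OF refl sets_measure_pmf_count_space])
  have "(\<lambda>\<omega>. edge_term a (int d) (snd \<omega>) t) \<in> borel_measurable (?U \<Otimes>\<^sub>M sample_space lam p)"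
    if "d \<in> UNIV" for d
    by (rule measurable_compose[OF measurable_snd])
       (simp add: measurable_sample_space measurable_edge_term_at)
  from measurable_compose_countable'[OF this fst countableI_type]
  have m: "(\<lambda>\<omega>. edge_term a (int (fst \<omega>)) (snd \<omega>) t) \<in> borel_measurable (?U \<Otimes>\<^sub>M sample_space lam p)"
    by simp
  have "(\<integral>\<omega>. edge_term a (int (fst \<omega>)) (snd \<omega>) t \<partial>orth_space lam p)
      = (\<integral>d. edge_char a lam p (int d) t \<partial>?U)"
    unfolding orth_space_eq edge_char_def
    by (rule UP.integral_fst'[symmetric, where f="\<lambda>\<omega>. edge_term a (int (fst \<omega>)) (snd \<omega>) t", simplified],
        rule UPP.integrable_const_bound[where B=1]) (use m in \<open>simp_all add: norm_edge_term_le\<close>)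
  also have "\<dots> = (\<Sum>d\<in>{0..<4}. pmf (pmf_of_set {0..<4::nat}) d *\<^sub>R edge_char a lam p (int d) t)"
    by (rule integral_measure_pmf) auto
  also have "\<dots> = (edge_char a lam p 0 t + edge_char a lam p 1 t + edge_char a lam p 2 t + edge_char a lam p 3 t) / 4"
    by (simp add: numeral_eq_Suc atLeast0_lessThan_Suc scaleR_conv_of_real field_simps)
  also have "edge_char a lam p 2 t = 0" by (rule edge_char_eq_0[OF lam t]) (simp add: unit_dir_2)
  also have "edge_char a lam p 3 t = 0" by (rule edge_char_eq_0[OF lam t]) (simp add: unit_dir_3)
  finally show ?thesis by simp
qed

lemma integral_edge_term_case_nat:
  assumes lam: "0 < lam" and x: "0 < x" and t: "0 \<le> t"
    and edge: "fst (unit_dir j) + snd (unit_dir j) = 1"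
  defines "e \<equiv> fst (unit_dir j) - snd (unit_dir j)"
  shows "(\<integral>\<omega>. edge_term a j (case_nat x (fst \<omega>), case_nat b (snd \<omega>)) t \<partial>sample_space lam p) =
    (if t < x then cis (a * e * t) else cis (a * e * x) * edge_char a lam p (turn j b) (t - x))"
proof -
  interpret P: prob_space "sample_space lam p" by (rule prob_space_sample_space[OF lam])
  have shift [measurable]: "(\<lambda>\<omega>. (case_nat x (fst \<omega>), case_nat b (snd \<omega>))) \<in> sample_borel \<rightarrow>\<^sub>M sample_borel"
    unfolding sample_borel_def by measurable
  have "(\<integral>\<omega>. edge_term a j (case_nat x (fst \<omega>), case_nat b (snd \<omega>)) t \<partial>sample_space lam p) =
      (\<integral>\<omega>. (if t < x then cis (a * e * t) else cis (a * e * x) * edge_term a (turn j b) \<omega> (t - x))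
        \<partial>sample_space lam p)"
  proof (rule integral_cong_AE)
    show "AE \<omega> in sample_space lam p. edge_term a j (case_nat x (fst \<omega>), case_nat b (snd \<omega>)) t =
        (if t < x then cis (a * e * t) else cis (a * e * x) * edge_term a (turn j b) \<omega> (t - x))"
      using AE_sample_space_regular_arrivals[OF lam]
      by eventually_elim (simp add: edge_term_case_nat[OF x _ t edge] e_def)
  next
    show "(\<lambda>\<omega>. edge_term a j (case_nat x (fst \<omega>), case_nat b (snd \<omega>)) t) \<in> borel_measurable (sample_space lam p)"
      unfolding measurable_sample_space by (rule measurable_compose[OF shift measurable_edge_term_at])
  next
    show "(\<lambda>\<omega>. if t < x then cis (a * e * t) else cis (a * e * x) * edge_term a (turn j b) \<omega> (t - x))
        \<in> borel_measurable (sample_space lam p)"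
      unfolding measurable_sample_space
      by (cases "t < x") (simp_all add: borel_measurable_times measurable_edge_term_at)
  qed
  also have "\<dots> = (if t < x then cis (a * e * t) else cis (a * e * x) * edge_char a lam p (turn j b) (t - x))"
    by (simp add: edge_char_def P.prob_space[simplified])
  finally show ?thesis .
qed

lemma measurable_integral_edge_term_case_nat:
  assumes lam: "0 < lam"
  shows "(\<lambda>x. \<integral>\<omega>. edge_term a j (case_nat x (fst \<omega>), case_nat b (snd \<omega>)) t \<partial>sample_space lam p)
    \<in> borel_measurable borel"
proof -
  interpret P: prob_space "sample_space lam p" by (rule prob_space_sample_space[OF lam])
  have "(\<lambda>z. (case_nat (fst z) (fst (snd z)), case_nat b (snd (snd z)))) \<in> (borel \<Otimes>\<^sub>M sample_borel) \<rightarrow>\<^sub>M sample_borel"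
    unfolding sample_borel_def by measurable
  from measurable_compose[OF this measurable_edge_term_at]
  have "(\<lambda>(x, \<omega>). edge_term a j (case_nat x (fst \<omega>), case_nat b (snd \<omega>)) t) \<in> borel_measurable (borel \<Otimes>\<^sub>M sample_borel)"
    by (simp add: case_prod_beta)
  moreover have sets: "sets (borel \<Otimes>\<^sub>M sample_space lam p) = sets (borel \<Otimes>\<^sub>M sample_borel)"
    by (rule sets_pair_measure_cong) (simp_all add: sets_sample_space)
  ultimately have "(\<lambda>(x, \<omega>). edge_term a j (case_nat x (fst \<omega>), case_nat b (snd \<omega>)) t)
      \<in> borel_measurable (borel \<Otimes>\<^sub>M sample_space lam p)"
    by (subst measurable_cong_sets[OF sets refl])
  then show ?thesis
    by (rule P.borel_measurable_lebesgue_integral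
        [where f="\<lambda>x \<omega>. edge_term a j (case_nat x (fst \<omega>), case_nat b (snd \<omega>)) t"])
qed

definition renewal_map :: "real \<Rightarrow> real \<Rightarrow> real \<Rightarrow> (real \<Rightarrow> complex) \<Rightarrow> real \<Rightarrow> complex" where
  "renewal_map lam k b H t = exp (- lam * t) *\<^sub>R cis (b * t)
     + k *\<^sub>R integral {0..t} (\<lambda>x. exp (- lam * x) *\<^sub>R (cis (b * x) * H (t - x)))"

lemma edge_char_renewal:
  assumes lam: "0 < lam" and p: "0 \<le> p" "p \<le> 1" and t: "0 \<le> t"
    and edge: "fst (unit_dir j) + snd (unit_dir j) = 1"
    and off_edge: "fst (unit_dir (turn j False)) + snd (unit_dir (turn j False)) = -1"
  defines "e \<equiv> fst (unit_dir j) - snd (unit_dir j)"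
  shows "edge_char a lam p j t = renewal_map lam (lam * p) (a * e) (edge_char a lam p (turn j True)) t"
proof -
  define K where "K = cis (a * e * t)"
  define G where "G = (\<lambda>x. cis (a * e * x) * edge_char a lam p (turn j True) (t - x))"
  define Q where "Q = (\<lambda>b x. \<integral>\<omega>. edge_term a j (case_nat x (fst \<omega>), case_nat b (snd \<omega>)) t \<partial>sample_space lam p)"
  have Q: "Q b \<in> borel_measurable borel" for b
    unfolding Q_def by (rule measurable_integral_edge_term_case_nat[OF lam])
  have Q_eq: "Q b x = (if t < x then K else cis (a * e * x) * edge_char a lam p (turn j b) (t - x))"
    if "0 < x" for b x
    unfolding Q_def K_def e_def by (rule integral_edge_term_case_nat[OF lam that t edge])
  have F: "(\<lambda>x. edge_char a lam p (turn j True) (t - x)) \<in> borel_measurable borel"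
    using measurable_compose[OF _ measurable_edge_char[OF lam], of "\<lambda>x. t - x"] by simp
  have G: "G \<in> borel_measurable borel"
    unfolding G_def
    by (rule borel_measurable_times[OF _ F]) (intro borel_measurable_continuous_onI continuous_intros)
  have G_bound: "norm (G x) \<le> 1" for x
    unfolding G_def using norm_edge_char_le[OF lam] by (simp add: norm_mult)
  have "edge_char a lam p j t = p *\<^sub>R (\<integral>x. Q True x \<partial>exp_law lam) + (1 - p) *\<^sub>R (\<integral>x. Q False x \<partial>exp_law lam)"
    unfolding edge_char_def Q_def
    by (rule integral_sample_space_first_step[OF lam p measurable_edge_term_at norm_edge_term_le])
  also have "(\<integral>x. Q True x \<partial>exp_law lam) =
      exp (- lam * t) *\<^sub>R K + lam *\<^sub>R integral {0..t} (\<lambda>x. exp (- lam * x) *\<^sub>R G x)"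
    using AE_exp_law_pos[OF lam]
    by (intro integral_exp_law_split[OF lam t Q G G_bound]) (auto simp: Q_eq G_def elim: AE_mp)
  also have "(\<integral>x. Q False x \<partial>exp_law lam) =
      exp (- lam * t) *\<^sub>R K + lam *\<^sub>R integral {0..t} (\<lambda>x. exp (- lam * x) *\<^sub>R (0 :: complex))"
  proof (rule integral_exp_law_split[OF lam t Q measurable_const, where B=0])
    show "AE x in exp_law lam. Q False x = (if t < x then K else 0)"
      using AE_exp_law_pos[OF lam] AE_exp_law_neq[where lam=lam and t=t]
      by eventually_elim (simp add: Q_eq edge_char_eq_0[OF lam _ off_edge])
  qed simp_all
  finally show ?thesis
    unfolding renewal_map_def K_def G_def by (simp add: algebra_simps scaleR_add_right)
qed

lemma edge_char_0_renewal:
  assumes "0 < lam" "0 \<le> p" "p \<le> 1" "0 \<le> t"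
  shows "edge_char a lam p 0 t = renewal_map lam (lam * p) a (edge_char a lam p 1) t"
  using edge_char_renewal[OF assms, of 0 a] by (simp add: unit_dir_0 unit_dir_minus_1 turn_def)

lemma edge_char_1_renewal:
  assumes "0 < lam" "0 \<le> p" "p \<le> 1" "0 \<le> t"
  shows "edge_char a lam p 1 t = renewal_map lam (lam * p) (-a) (edge_char a lam p 0) t"
  using edge_char_renewal[OF assms, of 1 a] by (simp add: unit_dir_1 unit_dir_2 turn_def)

section \<open>The explicit solution\<close>

text \<open>The solutions of \<open>y'' = q y\<close> with initial values \<open>(y(0), y'(0)) = (1, 0)\<close> and \<open>(0, 1)\<close>.\<close>

definition cosq :: "real \<Rightarrow> real \<Rightarrow> real" where
  "cosq q t = (if 0 < q then cosh (sqrt q * t) else if q < 0 then cos (sqrt (- q) * t) else 1)"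

definition sinq :: "real \<Rightarrow> real \<Rightarrow> real" where
  "sinq q t = (if 0 < q then sinh (sqrt q * t) / sqrt q
     else if q < 0 then sin (sqrt (- q) * t) / sqrt (- q) else t)"

lemma has_real_derivative_cosq: "(cosq q has_real_derivative q * sinq q t) (at t)"
proof -
  consider "0 < q" | "q < 0" | "q = 0" by linarith
  then show ?thesis
  proof cases
    case 1
    have "((\<lambda>t. cosh (sqrt q * t)) has_real_derivative sinh (sqrt q * t) * sqrt q) (at t)"
      by (auto intro!: derivative_eq_intros)
    moreover have "sinh (sqrt q * t) * sqrt q = q * (sinh (sqrt q * t) / sqrt q)"
      using 1 by (simp add: field_simps)
    ultimately show ?thesis using 1 unfolding cosq_def sinq_def by simp
  next
    case 2
    define s where "s = sqrt (-q)"
    have s: "0 < s" "q = - (s * s)" using 2 by (simp_all add: s_def)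
    have "((\<lambda>t. cos (s * t)) has_real_derivative - sin (s * t) * s) (at t)"
      by (auto intro!: derivative_eq_intros)
    moreover have "- sin (s * t) * s = q * (sin (s * t) / s)"
      using s by (simp add: field_simps)
    ultimately show ?thesis using 2 unfolding cosq_def sinq_def s_def by simp
  qed (simp add: cosq_def[abs_def] sinq_def[abs_def])
qed

lemma has_real_derivative_sinq: "(sinq q has_real_derivative cosq q t) (at t)"
proof -
  consider "0 < q" | "q < 0" | "q = 0" by linarith
  then show ?thesis
  proof cases
    case 1
    have "((\<lambda>t. sinh (sqrt q * t)) has_real_derivative cosh (sqrt q * t) * sqrt q) (at t)"
      by (auto intro!: derivative_eq_intros)
    from DERIV_cdivide[OF this, of "sqrt q"] show ?thesis
      using 1 unfolding cosq_def sinq_def by simp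
  next
    case 2
    have "((\<lambda>t. sin (sqrt (-q) * t)) has_real_derivative cos (sqrt (-q) * t) * sqrt (-q)) (at t)"
      by (auto intro!: derivative_eq_intros)
    from DERIV_cdivide[OF this, of "sqrt (-q)"] show ?thesis
      using 2 unfolding cosq_def sinq_def by simp
  qed (simp add: cosq_def sinq_def[abs_def])
qed

lemma continuous_on_cosq [continuous_intros]: "continuous_on S (cosq q)"
  and continuous_on_sinq [continuous_intros]: "continuous_on S (sinq q)"
  using has_real_derivative_cosq has_real_derivative_sinq
  by (meson DERIV_isCont continuous_at_imp_continuous_on)+

text \<open>For \<open>q = k\<^sup>2 - a\<^sup>2\<close>, the pair \<open>(pair_sol k a, pair_sol k (-a))\<close> solves
  \<open>A' = i a A + k B\<close>, \<open>B' = - i a B + k A\<close> with \<open>A(0) = B(0) = 1\<close>.\<close>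

definition pair_sol :: "real \<Rightarrow> real \<Rightarrow> real \<Rightarrow> complex" where
  "pair_sol k a t = cosq (k\<^sup>2 - a\<^sup>2) t + (k + \<i> * a) * sinq (k\<^sup>2 - a\<^sup>2) t"

lemma pair_sol_0 [simp]: "pair_sol k a 0 = 1"
  by (simp add: pair_sol_def cosq_def sinq_def)

lemma continuous_on_pair_sol: "continuous_on S (pair_sol k a)"
  unfolding pair_sol_def[abs_def] by (intro continuous_intros)

lemma has_vector_derivative_pair_sol:
  "(pair_sol k a has_vector_derivative (\<i> * a * pair_sol k a t + k * pair_sol k (-a) t)) (at t within S)"
proof -
  let ?q = "k\<^sup>2 - a\<^sup>2"
  have "(pair_sol k a has_vector_derivative (?q * sinq ?q t + (k + \<i> * a) * cosq ?q t)) (at t within S)"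
    unfolding pair_sol_def[abs_def]
    by (rule has_vector_derivative_add[OF has_vector_derivative_of_real[OF has_field_derivative_at_within[OF has_real_derivative_cosq]]
        has_vector_derivative_mult_right[OF has_vector_derivative_of_real[OF has_field_derivative_at_within[OF has_real_derivative_sinq]]]])
  moreover have "?q * sinq ?q t + (k + \<i> * a) * cosq ?q t = \<i> * a * pair_sol k a t + k * pair_sol k (-a) t"
    unfolding pair_sol_def by (simp add: algebra_simps power2_eq_square)
  ultimately show ?thesis by simp
qed

lemma integral_cis_mult_pair_sol:
  assumes t: "0 \<le> t"
  shows "k *\<^sub>R integral {0..t} (\<lambda>x. cis (a * x) * pair_sol k (-a) (t - x)) = pair_sol k a t - cis (a * t)"
proof -
  define H where "H = (\<lambda>x. - (cis (a * x) * pair_sol k a (t - x)))"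
  have "((\<lambda>x. k * (cis (a * x) * pair_sol k (-a) (t - x))) has_integral (H t - H 0)) {0..t}"
  proof (rule fundamental_theorem_of_calculus[OF t])
    fix x :: real
    have "((\<lambda>x. t - x) has_vector_derivative -1) (at x within {0..t})"
      using has_real_derivative_iff_has_vector_derivative[THEN iffD1, OF DERIV_diff[OF DERIV_const DERIV_ident]]
      by (simp add: has_vector_derivative_at_within)
    from vector_diff_chain_within[OF this has_vector_derivative_pair_sol]
    have "((\<lambda>x. pair_sol k a (t - x)) has_vector_derivative
        - (\<i> * a * pair_sol k a (t - x) + k * pair_sol k (-a) (t - x))) (at x within {0..t})"
      by (simp add: o_def)
    from has_vector_derivative_minus[OF has_vector_derivative_mult[OF has_vector_derivative_cis_mult this]]
    show "(H has_vector_derivative k * (cis (a * x) * pair_sol k (-a) (t - x))) (at x within {0..t})"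
      unfolding H_def by (rule has_vector_derivative_eq_rhs) (simp add: algebra_simps)
  qed
  then show ?thesis
    by (simp add: H_def integral_unique scaleR_conv_of_real integral_mult_right[symmetric]
        del: integral_mult_right)
qed

definition damped_pair_sol :: "real \<Rightarrow> real \<Rightarrow> real \<Rightarrow> real \<Rightarrow> complex" where
  "damped_pair_sol lam k a t = exp (- lam * t) *\<^sub>R pair_sol k a t"

lemma continuous_on_damped_pair_sol: "continuous_on S (damped_pair_sol lam k a)"
  unfolding damped_pair_sol_def[abs_def] by (intro continuous_intros continuous_on_pair_sol)

lemma damped_pair_sol_renewal:
  assumes t: "0 \<le> t"
  shows "damped_pair_sol lam k a t = renewal_map lam k a (damped_pair_sol lam k (-a)) t"
proof -
  let ?J = "integral {0..t} (\<lambda>x. cis (a * x) * pair_sol k (-a) (t - x))"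
  have "integral {0..t} (\<lambda>x. exp (- lam * x) *\<^sub>R (cis (a * x) * damped_pair_sol lam k (-a) (t - x)))
      = integral {0..t} (\<lambda>x. exp (- lam * t) *\<^sub>R (cis (a * x) * pair_sol k (-a) (t - x)))"
  proof (rule integral_cong)
    fix x :: real
    have "exp (- lam * x) * exp (- lam * (t - x)) = exp (- lam * t)"
      by (simp add: exp_add[symmetric] algebra_simps)
    then show "exp (- lam * x) *\<^sub>R (cis (a * x) * damped_pair_sol lam k (-a) (t - x)) =
        exp (- lam * t) *\<^sub>R (cis (a * x) * pair_sol k (-a) (t - x))"
      unfolding damped_pair_sol_def by (simp add: scaleR_conv_of_real algebra_simps flip: of_real_mult)
  qed
  also have "\<dots> = exp (- lam * t) *\<^sub>R ?J" by simp
  finally have "renewal_map lam k a (damped_pair_sol lam k (-a)) t = exp (- lam * t) *\<^sub>R (cis (a * t) + k *\<^sub>R ?J)"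
    unfolding renewal_map_def by (simp add: scaleR_add_right mult.commute)
  also have "\<dots> = damped_pair_sol lam k a t"
    using integral_cis_mult_pair_sol[OF t, of k a] by (simp add: damped_pair_sol_def)
  finally show ?thesis ..
qed

lemma bracket_csqrt_eq:
  "bracket k t (csqrt (of_real q)) = 2 * cosq q t + 2 * k * sinq q t"
proof -
  consider "0 < q" | "q < 0" | "q = 0" by linarith
  then show ?thesis
  proof cases
    case 1
    define s where "s = sqrt q"
    have s: "0 < s" "csqrt (of_real q) = of_real s" using 1 by (simp_all add: csqrt_of_real s_def)
    have r: "(1 + k / s) * exp (t * s) + (1 - k / s) * exp (- t * s) = 2 * cosh (s * t) + 2 * k * (sinh (s * t) / s)"
      using s(1) by (simp add: cosh_def sinh_def field_simps mult.commute)
    have "bracket k t (csqrt (of_real q)) = of_real ((1 + k / s) * exp (t * s) + (1 - k / s) * exp (- t * s))"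
      unfolding bracket_def s using s(1) by (simp add: exp_of_real[symmetric])
    also have "\<dots> = of_real (2 * cosh (s * t) + 2 * k * (sinh (s * t) / s))"
      by (simp only: r)
    finally show ?thesis using 1 by (simp add: cosq_def sinq_def s_def)
  next
    case 2
    define w where "w = sqrt (- q)"
    have w: "0 < w" "csqrt (of_real q) = \<i> * of_real w" using 2 by (simp_all add: csqrt_of_real' w_def)
    have e1: "exp (of_real t * (\<i> * of_real w)) = Complex (cos (t * w)) (sin (t * w))"
      using cis_conv_exp[of "t * w"] by (simp add: cis.code mult.commute mult.left_commute)
    have e2: "exp (- of_real t * (\<i> * of_real w)) = Complex (cos (t * w)) (- sin (t * w))"
      using cis_conv_exp[of "- (t * w)"] by (simp add: cis.code mult.commute mult.left_commute)
    have "bracket k t (csqrt (of_real q)) =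
        (1 + k / (\<i> * w)) * Complex (cos (t * w)) (sin (t * w)) +
        (1 - k / (\<i> * w)) * Complex (cos (t * w)) (- sin (t * w))"
      unfolding bracket_def w(2) e1[symmetric] e2[symmetric] using w(1) by simp
    also have "\<dots> = of_real (2 * cos (w * t) + 2 * k * (sin (w * t) / w))"
      using w(1) by (simp add: complex_eq_iff field_simps mult.commute)
    finally show ?thesis using 2 by (simp add: cosq_def sinq_def w_def)
  qed (simp add: bracket_def cosq_def sinq_def)
qed

lemma damped_pair_sol_sum:
  "damped_pair_sol lam k a t + damped_pair_sol lam k (-a) t
     = exp (- lam * t) *\<^sub>R bracket k t (csqrt (of_real (k\<^sup>2 - a\<^sup>2)))"
proof -
  have "pair_sol k a t + pair_sol k (-a) t = 2 * cosq (k\<^sup>2 - a\<^sup>2) t + 2 * k * sinq (k\<^sup>2 - a\<^sup>2) t"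
    by (simp add: pair_sol_def algebra_simps)
  then show ?thesis
    unfolding damped_pair_sol_def bracket_csqrt_eq by (simp flip: scaleR_add_right)
qed

section \<open>Uniqueness\<close>

lemma integrable_on_renewal_integrand:
  fixes G :: "real \<Rightarrow> complex"
  assumes lam: "0 \<le> lam" and G: "G \<in> borel_measurable borel"
    and bound: "\<And>y. y \<in> {0..t} \<Longrightarrow> norm (G y) \<le> B"
  shows "(\<lambda>x. exp (- lam * x) *\<^sub>R (cis (b * x) * G (t - x))) integrable_on {0..t}"
proof (rule integrable_on_Icc_bounded_measurable)
  have G_shift: "(\<lambda>x. G (t - x)) \<in> borel_measurable borel"
    using measurable_compose[OF _ G, of "\<lambda>x. t - x"] by simp
  show "(\<lambda>x. exp (- lam * x) *\<^sub>R (cis (b * x) * G (t - x))) \<in> borel_measurable borel"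
    by (rule borel_measurable_scaleR[OF _ borel_measurable_times[OF _ G_shift]])
      (intro borel_measurable_continuous_onI continuous_intros)+
  fix x assume "x \<in> {0..t}"
  then have "exp (- lam * x) * norm (G (t - x)) \<le> 1 * B"
    using lam bound[of "t - x"] by (intro mult_mono) auto
  then show "norm (exp (- lam * x) *\<^sub>R (cis (b * x) * G (t - x))) \<le> B"
    by (simp add: norm_mult)
qed

lemma norm_renewal_map_diff_le:
  fixes H H' :: "real \<Rightarrow> complex"
  assumes lam: "0 \<le> lam" and k: "0 \<le> k"
    and H: "H \<in> borel_measurable borel" and H': "H' \<in> borel_measurable borel"
    and bound: "\<And>y. y \<in> {0..t} \<Longrightarrow> norm (H y) \<le> B" "\<And>y. y \<in> {0..t} \<Longrightarrow> norm (H' y) \<le> B"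
  shows "norm (renewal_map lam k b H t - renewal_map lam k b H' t)
    \<le> k * integral {0..t} (\<lambda>x. norm (H (t - x) - H' (t - x)))"
proof -
  define f where "f = (\<lambda>H x. exp (- lam * x) *\<^sub>R (cis (b * x) * H (t - x)))"
  have int: "f H integrable_on {0..t}" "f H' integrable_on {0..t}"
    unfolding f_def using integrable_on_renewal_integrand[OF lam] H H' bound by blast+
  have "renewal_map lam k b H t - renewal_map lam k b H' t =
      k *\<^sub>R (integral {0..t} (f H) - integral {0..t} (f H'))"
    unfolding renewal_map_def f_def by (simp add: scaleR_diff_right)
  also have "\<dots> = k *\<^sub>R integral {0..t} (\<lambda>x. f H x - f H' x)"
    using integral_diff[OF int] by simp
  finally have diff: "renewal_map lam k b H t - renewal_map lam k b H' t = \<dots>" .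
  have "norm (integral {0..t} (\<lambda>x. f H x - f H' x)) \<le> integral {0..t} (\<lambda>x. norm (H (t - x) - H' (t - x)))"
  proof (rule Henstock_Kurzweil_Integration.integral_norm_bound_integral)
    show "(\<lambda>x. f H x - f H' x) integrable_on {0..t}"
      using int by (rule integrable_diff)
    have "norm (norm (H y - H' y)) \<le> B + B" if "y \<in> {0..t}" for y
      using bound[OF that] norm_triangle_ineq4[of "H y" "H' y"] by simp
    then show "(\<lambda>x. norm (H (t - x) - H' (t - x))) integrable_on {0..t}"
      using H H' by (intro integrable_on_reflect_bounded_measurable[where B="B + B"]) measurable
    show "norm (f H x - f H' x) \<le> norm (H (t - x) - H' (t - x))" if "x \<in> {0..t}" for x
    proof -
      have "exp (- lam * x) * norm (H (t - x) - H' (t - x)) \<le> 1 * norm (H (t - x) - H' (t - x))"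
        using that lam by (intro mult_right_mono) auto
      then show ?thesis
        by (simp add: f_def norm_mult flip: scaleR_diff_right right_diff_distrib)
    qed
  qed
  then show ?thesis unfolding diff using k by (simp add: mult_left_mono)
qed

lemma renewal_pair_unique:
  fixes F0 F1 G0 G1 :: "real \<Rightarrow> complex"
  assumes lam: "0 \<le> lam" and k: "0 \<le> k"
    and [measurable]: "F0 \<in> borel_measurable borel" "F1 \<in> borel_measurable borel"
      "G0 \<in> borel_measurable borel" "G1 \<in> borel_measurable borel"
    and bound: "\<And>s. s \<in> {0..T} \<Longrightarrow> norm (F0 s) \<le> B \<and> norm (F1 s) \<le> B \<and> norm (G0 s) \<le> B \<and> norm (G1 s) \<le> B"
    and F: "\<And>s. s \<in> {0..T} \<Longrightarrow> F0 s = renewal_map lam k b0 F1 s \<and> F1 s = renewal_map lam k b1 F0 s"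
    and G: "\<And>s. s \<in> {0..T} \<Longrightarrow> G0 s = renewal_map lam k b0 G1 s \<and> G1 s = renewal_map lam k b1 G0 s"
    and t: "t \<in> {0..T}"
  shows "F0 t = G0 t \<and> F1 t = G1 t"
proof -
  define D0 where "D0 = (\<lambda>s. F0 s - G0 s)"
  define D1 where "D1 = (\<lambda>s. F1 s - G1 s)"
  have [measurable]: "D0 \<in> borel_measurable borel" "D1 \<in> borel_measurable borel"
    unfolding D0_def D1_def by measurable
  have D_bound: "norm (D0 s) \<le> B + B" "norm (D1 s) \<le> B + B" if "s \<in> {0..T}" for s
    using bound[OF that] norm_triangle_ineq4[of "F0 s" "G0 s"] norm_triangle_ineq4[of "F1 s" "G1 s"]
    unfolding D0_def D1_def by linarith+
  have int_D: "(\<lambda>x. norm (D (s - x))) integrable_on {0..s}"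
    if "D \<in> borel_measurable borel" "\<And>y. y \<in> {0..T} \<Longrightarrow> norm (D y) \<le> B + B" "s \<in> {0..T}"
    for D :: "real \<Rightarrow> complex" and s
    using that by (intro integrable_on_reflect_bounded_measurable[where B="B + B"]) auto
  have D0_le: "norm (D0 s) \<le> k * integral {0..s} (\<lambda>x. norm (D1 (s - x)))" if "s \<in> {0..T}" for s
    using that F[OF that] G[OF that] bound
    by (auto simp: D0_def D1_def intro!: norm_renewal_map_diff_le[where B=B, OF lam k])
  have D1_le: "norm (D1 s) \<le> k * integral {0..s} (\<lambda>x. norm (D0 (s - x)))" if "s \<in> {0..T}" for s
    using that F[OF that] G[OF that] bound
    by (auto simp: D0_def D1_def intro!: norm_renewal_map_diff_le[where B=B, OF lam k])
  define \<phi> where "\<phi> = (\<lambda>s. norm (D0 s) + norm (D1 s))"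
  have "\<phi> t = 0"
  proof (rule convolution_gronwall[where \<phi>=\<phi> and M="4 * B" and T=T])
    show "\<phi> \<in> borel_measurable borel" unfolding \<phi>_def by measurable
    show "0 \<le> \<phi> s \<and> \<phi> s \<le> 4 * B" if "s \<in> {0..T}" for s
      using D_bound[OF that] unfolding \<phi>_def by simp
    show "\<phi> s \<le> k * integral {0..s} (\<lambda>x. \<phi> (s - x))" if s: "s \<in> {0..T}" for s
    proof -
      have "integral {0..s} (\<lambda>x. \<phi> (s - x)) =
          integral {0..s} (\<lambda>x. norm (D1 (s - x))) + integral {0..s} (\<lambda>x. norm (D0 (s - x)))"
        unfolding \<phi>_def using D_bound s
        by (subst integral_add[symmetric]) (auto intro!: int_D integral_cong)
      then show ?thesis
        using D0_le[OF s] D1_le[OF s] by (simp add: \<phi>_def distrib_left)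
    qed
  qed (use k t in auto)
  then show ?thesis by (simp add: \<phi>_def D0_def D1_def add_nonneg_eq_0_iff)
qed

lemma edge_char_eq_damped_pair_sol:
  assumes lam: "0 < lam" and p: "0 \<le> p" "p \<le> 1" and T: "0 \<le> T"
  shows "edge_char a lam p 0 T = damped_pair_sol lam (lam * p) a T \<and>
    edge_char a lam p 1 T = damped_pair_sol lam (lam * p) (-a) T"
proof -
  let ?G = "\<lambda>b. damped_pair_sol lam (lam * p) b"
  obtain B0 where B0: "\<And>s. s \<in> {0..T} \<Longrightarrow> norm (?G a s) \<le> B0"
    using continuous_on_compact_bound[OF compact_Icc continuous_on_damped_pair_sol] by metis
  obtain B1 where B1: "\<And>s. s \<in> {0..T} \<Longrightarrow> norm (?G (-a) s) \<le> B1"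
    using continuous_on_compact_bound[OF compact_Icc continuous_on_damped_pair_sol] by metis
  have "0 \<le> B0" "0 \<le> B1"
    using B0[of 0] B1[of 0] T norm_ge_zero order_trans by (metis atLeastAtMost_iff order_refl)+
  show ?thesis
  proof (rule renewal_pair_unique[where B="1 + B0 + B1" and T=T])
    show "norm (edge_char a lam p 0 s) \<le> 1 + B0 + B1 \<and> norm (edge_char a lam p 1 s) \<le> 1 + B0 + B1 \<and>
        norm (?G a s) \<le> 1 + B0 + B1 \<and> norm (?G (-a) s) \<le> 1 + B0 + B1" if "s \<in> {0..T}" for s
      using norm_edge_char_le[OF lam, of a p 0 s] norm_edge_char_le[OF lam, of a p 1 s]
        B0[OF that] B1[OF that] \<open>0 \<le> B0\<close> \<open>0 \<le> B1\<close> by linarith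
    show "edge_char a lam p 0 s = renewal_map lam (lam * p) a (edge_char a lam p 1) s \<and>
        edge_char a lam p 1 s = renewal_map lam (lam * p) (-a) (edge_char a lam p 0) s" if "s \<in> {0..T}" for s
      using that edge_char_0_renewal[OF lam p] edge_char_1_renewal[OF lam p] by simp
    show "?G a s = renewal_map lam (lam * p) a (?G (-a)) s \<and>
        ?G (-a) s = renewal_map lam (lam * p) (-a) (?G a) s" if "s \<in> {0..T}" for s
      using that damped_pair_sol_renewal[of s lam "lam * p" a] damped_pair_sol_renewal[of s lam "lam * p" "-a"]
      by simp
  qed (use lam p T in \<open>auto intro: measurable_edge_char borel_measurable_continuous_onI
      continuous_on_damped_pair_sol\<close>)
qed

theorem mainTheorem6:
  fixes lam c p \<alpha> t :: real
  assumes "lam > 0" and "c > 0" and "0 < p" and "p < 1" and "t > 0"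
  shows "(LINT \<omega>|orth_space lam p.
            indicator {\<omega>. posX c \<omega> t + posY c \<omega> t = c * t} \<omega>
              *\<^sub>R cis (\<alpha> * (posX c \<omega> t - posY c \<omega> t)))
         = complex_of_real (exp (- lam * t) / 4)
           * bracket (lam * p) t (csqrt (complex_of_real (lam\<^sup>2 * p\<^sup>2 - \<alpha>\<^sup>2 * c\<^sup>2)))"
proof -
  note lam = \<open>lam > 0\<close> and p = less_imp_le[OF \<open>0 < p\<close>] less_imp_le[OF \<open>p < 1\<close>] and t = \<open>t > 0\<close>
  let ?a = "\<alpha> * c" and ?k = "lam * p"
  have "(LINT \<omega>|orth_space lam p.
            indicator {\<omega>. posX c \<omega> t + posY c \<omega> t = c * t} \<omega> *\<^sub>R cis (\<alpha> * (posX c \<omega> t - posY c \<omega> t)))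
      = (\<integral>\<omega>. edge_term ?a (int (fst \<omega>)) (snd \<omega>) t \<partial>orth_space lam p)"
    using \<open>c > 0\<close> by (simp add: orth_integrand_eq_edge_term)
  also have "\<dots> = (edge_char ?a lam p 0 t + edge_char ?a lam p 1 t) / 4"
    by (rule integral_orth_space_edge_term[OF lam t])
  also have "\<dots> = (damped_pair_sol lam ?k ?a t + damped_pair_sol lam ?k (- ?a) t) / 4"
    using edge_char_eq_damped_pair_sol[OF lam p, of t ?a] t by simp
  also have "\<dots> = exp (- lam * t) *\<^sub>R bracket ?k t (csqrt (of_real (?k\<^sup>2 - ?a\<^sup>2))) / 4"
    by (simp only: damped_pair_sol_sum)
  finally show ?thesis
    by (simp add: scaleR_conv_of_real power_mult_distrib)
qed

end
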